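(* Let $(T_1,\dots,T_k)$ be a tuple of contractions on a Hilbert space $\mathcal{H}$ and $q_{ij}\in\mathbb{T}$ ($1\le i<j\le k$) with $T_iT_j=q_{ij}T_jT_i$ for $1\le i<j\le k$. Let $G_{dc}$ be the group described in the context and define $T:G_{dc}\to\mathcal{B}(\mathcal{H})$ by \[ T\Big(\prod_{1\le i<j\le k}q_{ij}^{m_{ij}}s_1^{m_1}\cdots s_k^{m_k}\Big)=\prod_{1\le i<j\le k}q_{ij}^{m_{ij}}\prod_{1\le i<j\le k}q_{ij}^{-m_i^+m_j^-}\big[(T_1^{m_1^-})^*\cdots(T_k^{m_k^-})^*\big]\big[T_1^{m_1^+}\cdots T_k^{m_k^+}\big], \] where on the right the $q_{ij}$ are the given scalars. Then $T$ is positive definite if and only if \[ S(u)=\sum_{v\subseteq u}(-1)^{|v|}T(x^{e(v)})^*T(x^{e(v)})\ge0 \] for every subset $u$ of $\{1,\dots,k\}$.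
   Context: For an integer $m$, $m^+=\max\{m,0\}$ and $m^-=-\min\{m,0\}$. The group $G_{dc}$ consists of formal elements $x^m=\prod_{1\le i<j\le k}q_{ij}^{m_{ij}}s_1^{m_1}\cdots s_k^{m_k}$ indexed by $m=(m_{ij}\,(1\le i<j\le k);\,m_1,\dots,m_k)$ with all entries in $\mathbb{Z}$, where $s_1,\dots,s_k$ and $q_{ij}$ are indeterminates subject to $s_is_j=q_{ij}s_js_i$, $s_is_j^{-1}=q_{ij}^{-1}s_j^{-1}s_i$ ($i<j$), with the $q_{ij}$ central; concretely the product is $x^mx^n=\prod_{1\le i<j\le k}q_{ij}^{-n_im_j}\,x^{m+n}$, the identity is $x^0$ and $(x^m)^{-1}=\prod_{i<j}q_{ij}^{-m_im_j}x^{-m}$. For $v\subseteq\{1,\dots,k\}$, $x^{e(v)}=s_1^{e_1}\cdots s_k^{e_k}$ with $e_l=1$ if $l\in v$ and $0$ otherwise (all $q_{ij}$-exponents zero); so $T(x^{e(v)})$ is the product of the $T_l$, $l\in v$, in increasing order. A function $T:G\to\mathcal{B}(\mathcal{H})$ on a group $G$ is positive definite if $T(s^{-1})=T(s)^*$ for all $s$ and $\sum_{s,t\in G}\langle T(t^{-1}s)h(s),h(t)\rangle\ge0$ for every finitely supported $h:G\to\mathcal{H}$. *)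

theory Defs
  imports "HOL-Algebra.Group" Complex_Main
begin

class chilbert = ab_group_add +
  fixes scaleC :: "complex \<Rightarrow> 'a \<Rightarrow> 'a"
    and cinner :: "'a \<Rightarrow> 'a \<Rightarrow> complex"
  assumes scaleC_add_right: "scaleC a (x + y) = scaleC a x + scaleC a y"
    and scaleC_add_left: "scaleC (a + b) x = scaleC a x + scaleC b x"
    and scaleC_scaleC: "scaleC a (scaleC b x) = scaleC (a * b) x"
    and scaleC_one: "scaleC 1 x = x"
    and cinner_add_left: "cinner (x + y) z = cinner x z + cinner y z"
    and cinner_scaleC_left: "cinner (scaleC a x) y = a * cinner x y"
    and cinner_commute: "cinner x y = cnj (cinner y x)"
    and cinner_self_nonneg: "Im (cinner x x) = 0 \<and> 0 \<le> Re (cinner x x)"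
    and cinner_self_zero: "cinner x x = 0 \<Longrightarrow> x = 0"
    and complete:
      "(\<forall>e>0. \<exists>N::nat. \<forall>m\<ge>N. \<forall>n\<ge>N.
            sqrt (Re (cinner (X m - X n) (X m - X n))) < e)
       \<Longrightarrow> \<exists>L. \<forall>e>0. \<exists>N::nat. \<forall>n\<ge>N.
            sqrt (Re (cinner (X n - L) (X n - L))) < e"

definition cnorm :: "'a::chilbert \<Rightarrow> real" where
  "cnorm x = sqrt (Re (cinner x x))"

definition bounded_op :: "('a::chilbert \<Rightarrow> 'a) \<Rightarrow> bool" where
  "bounded_op A \<longleftrightarrow> (\<forall>x y. A (x + y) = A x + A y) \<and> (\<forall>c x. A (scaleC c x) = scaleC c (A x))
     \<and> (\<exists>K. \<forall>x. cnorm (A x) \<le> K * cnorm x)"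

definition contraction :: "('a::chilbert \<Rightarrow> 'a) \<Rightarrow> bool" where
  "contraction A \<longleftrightarrow> bounded_op A \<and> (\<forall>x. cnorm (A x) \<le> cnorm x)"

definition adj :: "('a::chilbert \<Rightarrow> 'a) \<Rightarrow> ('a \<Rightarrow> 'a)" where
  "adj A = (SOME B. bounded_op B \<and> (\<forall>x y. cinner (A x) y = cinner x (B y)))"

definition cnonneg :: "complex \<Rightarrow> bool" where
  "cnonneg z \<longleftrightarrow> Im z = 0 \<and> 0 \<le> Re z"

definition positive_op :: "('a::chilbert \<Rightarrow> 'a) \<Rightarrow> bool" where
  "positive_op A \<longleftrightarrow> (\<forall>h. cnonneg (cinner (A h) h))"

fun ordprod :: "nat \<Rightarrow> (nat \<Rightarrow> 'a \<Rightarrow> 'a) \<Rightarrow> 'a \<Rightarrow> 'a" where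
  "ordprod 0 A = id"
| "ordprod (Suc n) A = ordprod n A \<circ> A (Suc n)"

definition positive_definite ::
  "('g, 'b) monoid_scheme \<Rightarrow> ('g \<Rightarrow> 'a::chilbert \<Rightarrow> 'a) \<Rightarrow> bool" where
  "positive_definite G T \<longleftrightarrow>
     (\<forall>s\<in>carrier G. T (inv\<^bsub>G\<^esub> s) = adj (T s)) \<and>
     (\<forall>h :: 'g \<Rightarrow> 'a. finite {s\<in>carrier G. h s \<noteq> 0} \<longrightarrow>
        (let F = {s\<in>carrier G. h s \<noteq> 0} in
          cnonneg (\<Sum>s\<in>F. \<Sum>t\<in>F. cinner (T (inv\<^bsub>G\<^esub> t \<otimes>\<^bsub>G\<^esub> s) (h s)) (h t))))"

text \<open>An element x^m is encoded by the pair (mq, ms) with mq i j = m_ij (1 \<le> i < j \<le> k)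
  and ms i = m_i (1 \<le> i \<le> k); all other entries are 0.\<close>
type_synonym gdc_elem = "(nat \<Rightarrow> nat \<Rightarrow> int) \<times> (nat \<Rightarrow> int)"

definition gdc_carrier :: "nat \<Rightarrow> gdc_elem set" where
  "gdc_carrier k = {(mq, ms). (\<forall>i j. \<not> (1 \<le> i \<and> i < j \<and> j \<le> k) \<longrightarrow> mq i j = 0)
                             \<and> (\<forall>i. \<not> (1 \<le> i \<and> i \<le> k) \<longrightarrow> ms i = 0)}"

text \<open>x^m x^n = prod q_ij^(- n_i m_j) x^(m+n).\<close>
definition gdc_mult :: "nat \<Rightarrow> gdc_elem \<Rightarrow> gdc_elem \<Rightarrow> gdc_elem" where
  "gdc_mult k m n =
     ((\<lambda>i j. if 1 \<le> i \<and> i < j \<and> j \<le> k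
             then fst m i j + fst n i j - snd n i * snd m j else 0),
      (\<lambda>i. snd m i + snd n i))"

definition Gdc :: "nat \<Rightarrow> gdc_elem monoid" where
  "Gdc k = \<lparr>carrier = gdc_carrier k, mult = gdc_mult k, one = (\<lambda>i j. 0, \<lambda>i. 0)\<rparr>"

definition gdc_e :: "nat \<Rightarrow> nat set \<Rightarrow> gdc_elem" where
  "gdc_e k v = (\<lambda>i j. 0, \<lambda>l. if l \<in> v \<and> 1 \<le> l \<and> l \<le> k then 1 else 0)"

definition pos_part :: "int \<Rightarrow> nat" where "pos_part m = nat (max m 0)"
definition neg_part :: "int \<Rightarrow> nat" where "neg_part m = nat (- min m 0)"

definition Tdc :: "nat \<Rightarrow> (nat \<Rightarrow> nat \<Rightarrow> complex) \<Rightarrow> (nat \<Rightarrow> 'a::chilbert \<Rightarrow> 'a)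
                    \<Rightarrow> gdc_elem \<Rightarrow> 'a \<Rightarrow> 'a" where
  "Tdc k q T m = (\<lambda>h.
     scaleC ((\<Prod>(i,j)\<in>{(i,j). 1 \<le> i \<and> i < j \<and> j \<le> k}. q i j powi fst m i j)
           * (\<Prod>(i,j)\<in>{(i,j). 1 \<le> i \<and> i < j \<and> j \<le> k}.
                 q i j powi (- (int (pos_part (snd m i)) * int (neg_part (snd m j))))))
       ((ordprod k (\<lambda>l. adj (T l ^^ neg_part (snd m l)))
         \<circ> ordprod k (\<lambda>l. T l ^^ pos_part (snd m l))) h))"

definition S_op :: "nat \<Rightarrow> (nat \<Rightarrow> nat \<Rightarrow> complex) \<Rightarrow> (nat \<Rightarrow> 'a::chilbert \<Rightarrow> 'a)
                    \<Rightarrow> nat set \<Rightarrow> 'a \<Rightarrow> 'a" where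
  "S_op k q T u = (\<lambda>h. \<Sum>v\<in>Pow u. scaleC ((-1) ^ card v)
        (adj (Tdc k q T (gdc_e k v)) (Tdc k q T (gdc_e k v) h)))"

end

theory Submission
  imports Defs
begin

(* Write T^a = T_1^a_1 ... T_k^a_k. The commutation relations give
   T(x^m) = c(m) (T^(m-))^* T^(m+) with c(m) a product of powers of the unimodular q_ij.

   If every S(u) is positive, fix finitely many group elements s >= L. Nesting over l = 1..k the
   one-variable telescoping identities
     I = T_l^*(m+1) T_l^(m+1) + SUM r <= m. (T_l^*(m-r) T_l^(m-r) - T_l^*(m-r+1) T_l^(m-r+1))
   factors the kernel as T(t^-1 s) = SUM (u,n). F(u,n,t)^* S(u) F(u,n,s), so that
   SUM s t. <T(t^-1 s) h(s), h(t)> = SUM (u,n). <S(u) Z(u,n), Z(u,n)> >= 0.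

   Conversely, testing positive definiteness with h supported on the elements x^-e(v), v <= u,
   with h(x^-e(v)) = +-(unimodular) T^e(v) g, the double sum collapses by inclusion-exclusion
   to <S(u) g, g>.

   Adjoints exist by the Riesz representation theorem, derived from the completeness axiom of
   chilbert. *)

lemma scaleC_zero_right [simp]: "scaleC a (0::'a::chilbert) = 0"
  using scaleC_add_right[of a "0::'a" 0] by simp

lemma scaleC_zero_left [simp]: "scaleC 0 (x::'a::chilbert) = 0"
  using scaleC_add_left[of 0 0 x] by simp

lemma scaleC_minus_left: "scaleC (- a) (x::'a::chilbert) = - scaleC a x"
  using scaleC_add_left[of a "-a" x] by (simp add: eq_neg_iff_add_eq_0 add.commute)

lemma scaleC_sum_right: "scaleC a (\<Sum>i\<in>I. f i) = (\<Sum>i\<in>I. scaleC a (f i :: 'a::chilbert))"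
  by (induction I rule: infinite_finite_induct) (auto simp: scaleC_add_right)

lemma scaleC_sum_list: "scaleC c (sum_list (map f xs)) = sum_list (map (\<lambda>x. scaleC c (f x :: 'a::chilbert)) xs)"
  by (induction xs) (auto simp: scaleC_add_right)

lemma cinner_zero_left [simp]: "cinner (0::'a::chilbert) y = 0"
  using cinner_add_left[of "0::'a" 0 y] by simp

lemma cinner_minus_left: "cinner (- (x::'a::chilbert)) y = - cinner x y"
  using cinner_add_left[of x "-x" y] by (simp add: eq_neg_iff_add_eq_0 add.commute)

lemma cinner_diff_left: "cinner ((x::'a::chilbert) - z) y = cinner x y - cinner z y"
  using cinner_add_left[of x "-z" y] by (simp add: cinner_minus_left)

lemma cinner_sum_left: "cinner (\<Sum>i\<in>I. f i) (y::'a::chilbert) = (\<Sum>i\<in>I. cinner (f i) y)"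
  by (induction I rule: infinite_finite_induct) (auto simp: cinner_add_left)

lemma cinner_sum_list_left:
  "cinner (sum_list (map f xs)) (y::'a::chilbert) = sum_list (map (\<lambda>x. cinner (f x) y) xs)"
  by (induction xs) (auto simp: cinner_add_left)

lemma cinner_cnj: "cnj (cinner (x::'a::chilbert) y) = cinner y x"
  by (simp add: cinner_commute[of y x])

lemma cinner_add_right: "cinner (x::'a::chilbert) (y + z) = cinner x y + cinner x z"
  by (metis cinner_add_left cinner_commute complex_cnj_add)

lemma cinner_scaleC_right: "cinner (x::'a::chilbert) (scaleC a y) = cnj a * cinner x y"
  by (metis cinner_commute cinner_scaleC_left complex_cnj_cnj complex_cnj_mult)

lemma cinner_zero_right [simp]: "cinner (x::'a::chilbert) 0 = 0"
  by (metis cinner_commute cinner_zero_left complex_cnj_zero)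

lemma cinner_minus_right: "cinner (x::'a::chilbert) (- y) = - cinner x y"
  by (metis cinner_commute cinner_minus_left complex_cnj_minus)

lemma cinner_diff_right: "cinner (x::'a::chilbert) (y - z) = cinner x y - cinner x z"
  by (metis cinner_commute cinner_diff_left complex_cnj_diff)

lemma cinner_sum_right: "cinner (y::'a::chilbert) (\<Sum>i\<in>I. f i) = (\<Sum>i\<in>I. cinner y (f i))"
  by (induction I rule: infinite_finite_induct) (auto simp: cinner_add_right)

lemma cinner_sum_sum:
  "cinner (\<Sum>s\<in>F. a s) (\<Sum>t\<in>G. b t) = (\<Sum>s\<in>F. \<Sum>t\<in>G. cinner (a s) (b t :: 'a::chilbert))"
  by (simp add: cinner_sum_left cinner_sum_right) (rule sum.swap)

lemma cinner_self_eq_0: "cinner (x::'a::chilbert) x = 0 \<longleftrightarrow> x = 0"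
  using cinner_self_zero by auto

lemma cinner_ext: "(\<And>x. cinner x (u::'a::chilbert) = cinner x v) \<Longrightarrow> u = v"
  by (metis cinner_diff_right cinner_self_eq_0 eq_iff_diff_eq_0)

lemma cinner_self_of_cnorm: "cinner x x = complex_of_real ((cnorm (x::'a::chilbert))^2)"
  using cinner_self_nonneg[of x] by (simp add: cnorm_def complex_eq_iff)

lemma cnorm_sq: "(cnorm (x::'a::chilbert))^2 = Re (cinner x x)"
  by (simp add: cinner_self_of_cnorm)

lemma cnorm_nonneg: "0 \<le> cnorm (x::'a::chilbert)"
  unfolding cnorm_def using cinner_self_nonneg[of x] by simp

lemma cnorm_eq_0: "cnorm (x::'a::chilbert) = 0 \<longleftrightarrow> x = 0"
  by (metis cinner_self_eq_0 cinner_self_of_cnorm of_real_eq_0_iff zero_eq_power2)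

lemma cnorm_zero [simp]: "cnorm (0::'a::chilbert) = 0"
  by (simp add: cnorm_eq_0)

lemma cauchy_schwarz: "(cmod (cinner (x::'a::chilbert) y))^2 \<le> (cnorm x)^2 * (cnorm y)^2"
proof (cases "y = 0")
  case True
  then show ?thesis by simp
next
  case False
  define r where "r = (cnorm y)^2"
  have r: "r > 0"
    using False cnorm_eq_0[of y] cnorm_nonneg[of y] by (simp add: r_def)
  define c where "c = cinner x y"
  define t where "t = c / complex_of_real r"
  have "cinner (x - scaleC t y) (x - scaleC t y)
      = cinner x x - cnj t * c - t * cnj c + t * cnj t * cinner y y"
    by (simp add: cinner_diff_left cinner_diff_right cinner_scaleC_left cinner_scaleC_right
        c_def algebra_simps flip: cinner_cnj[of x y])
  also have "\<dots> = cinner x x - complex_of_real ((cmod c)^2 / r)"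
    using r complex_norm_square[of c] by (simp add: t_def r_def cinner_self_of_cnorm field_simps)
  finally have "0 \<le> Re (cinner x x - complex_of_real ((cmod c)^2 / r))"
    by (metis cnorm_sq zero_le_power2)
  then have "(cmod c)^2 / r \<le> (cnorm x)^2"
    by (simp add: cnorm_sq del: of_real_divide of_real_power)
  then show ?thesis
    using r by (simp add: c_def r_def field_simps)
qed

lemma cinner_bound: "cmod (cinner (x::'a::chilbert) y) \<le> cnorm x * cnorm y"
  using cauchy_schwarz[of x y] cnorm_nonneg
  by (metis mult_nonneg_nonneg power2_le_imp_le power_mult_distrib)

lemma cnorm_triangle: "cnorm ((x::'a::chilbert) + y) \<le> cnorm x + cnorm y"
proof -
  have "Re (cinner y x) = Re (cinner x y)"
    by (metis cinner_cnj cnj.simps(1))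
  then have "(cnorm (x + y))^2 = (cnorm x)^2 + (cnorm y)^2 + 2 * Re (cinner x y)"
    by (simp add: cnorm_sq cinner_add_left cinner_add_right)
  also have "\<dots> \<le> (cnorm x + cnorm y)^2"
    using cinner_bound[of x y] complex_Re_le_cmod[of "cinner x y"] by (simp add: power2_sum)
  finally show ?thesis
    using cnorm_nonneg by (meson add_nonneg_nonneg power2_le_imp_le)
qed

lemma cnorm_scaleC: "cnorm (scaleC a (x::'a::chilbert)) = cmod a * cnorm x"
proof -
  have "complex_of_real ((cnorm (scaleC a x))^2) = a * cnj a * cinner x x"
    by (simp only: cinner_self_of_cnorm[symmetric])
       (simp add: cinner_scaleC_left cinner_scaleC_right mult.assoc)
  also have "\<dots> = complex_of_real ((cmod a * cnorm x)^2)"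
    by (simp add: cinner_self_of_cnorm power_mult_distrib flip: complex_norm_square)
  finally have "complex_of_real ((cnorm (scaleC a x))^2) = complex_of_real ((cmod a * cnorm x)^2)" .
  then have "(cnorm (scaleC a x))^2 = (cmod a * cnorm x)^2"
    by (simp only: of_real_eq_iff)
  then show ?thesis
    using cnorm_nonneg[of x] cnorm_nonneg[of "scaleC a x"] by (simp add: power2_eq_iff_nonneg)
qed

lemma cnorm_diff_commute: "cnorm ((x::'a::chilbert) - y) = cnorm (y - x)"
  unfolding cnorm_def by (metis cinner_minus_left cinner_minus_right minus_diff_eq)

lemma cnorm_parallelogram:
  "(cnorm ((x::'a::chilbert) - y))^2 + (cnorm (x + y))^2 = 2 * (cnorm x)^2 + 2 * (cnorm y)^2"
  by (simp add: cnorm_sq cinner_diff_left cinner_diff_right cinner_add_left cinner_add_right)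

lemma cnorm_Cauchy_convergent:
  assumes "\<And>e. e > 0 \<Longrightarrow> \<exists>N::nat. \<forall>m\<ge>N. \<forall>n\<ge>N. cnorm (X m - X n) < e"
  obtains L where "(\<lambda>n. cnorm (X n - L)) \<longlonglongrightarrow> 0"
proof -
  obtain L where "\<forall>e>0. \<exists>N::nat. \<forall>n\<ge>N. cnorm (X n - L) < e"
    using complete[of X] assms unfolding cnorm_def by blast
  then have "(\<lambda>n. cnorm (X n - L)) \<longlonglongrightarrow> 0"
    by (simp add: LIMSEQ_iff cnorm_nonneg)
  then show ?thesis by (rule that)
qed

section \<open>The Riesz representation theorem\<close>

lemma cnorm_convergent_if_diff_bound:
  assumes "(\<lambda>n. cnorm (Y n)) \<longlonglongrightarrow> D"
    and "\<And>m n. (cnorm (Y m - Y n))^2 \<le> 2 * ((cnorm (Y m))^2 - D^2) + 2 * ((cnorm (Y n))^2 - D^2)"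
  obtains L where "(\<lambda>n. cnorm (Y n - L)) \<longlonglongrightarrow> 0"
proof -
  define r where "r n = (cnorm (Y n))^2 - D^2" for n
  have Y_diff: "(cnorm (Y m - Y n))^2 \<le> 2 * r m + 2 * r n" for m n
    using assms(2) by (simp add: r_def)
  have "r \<longlonglongrightarrow> 0"
    unfolding r_def using tendsto_diff[OF tendsto_power[OF assms(1), of 2] tendsto_const[of "D^2"]]
    by simp
  have "\<exists>N. \<forall>m\<ge>N. \<forall>n\<ge>N. cnorm (Y m - Y n) < e" if "e > 0" for e
  proof -
    have "e^2 / 4 > 0" using \<open>e > 0\<close> by simp
    then obtain N where N: "\<And>n. n \<ge> N \<Longrightarrow> \<bar>r n\<bar> < e^2 / 4"
      using \<open>r \<longlonglongrightarrow> 0\<close> unfolding LIMSEQ_iff by (metis real_norm_def diff_zero)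
    have "cnorm (Y m - Y n) < e" if "m \<ge> N" "n \<ge> N" for m n
    proof -
      have "(cnorm (Y m - Y n))^2 < e^2"
        using Y_diff[of m n] N[OF that(1)] N[OF that(2)] by (simp add: abs_less_iff)
      then show ?thesis using \<open>e > 0\<close> by (simp add: power2_less_imp_less)
    qed
    then show ?thesis by blast
  qed
  then show ?thesis
    using cnorm_Cauchy_convergent that by blast
qed

lemma cnorm_minimizer_exists:
  fixes f :: "'a::chilbert \<Rightarrow> complex"
  assumes add: "\<And>x y. f (x + y) = f x + f y"
    and hom: "\<And>c x. f (scaleC c x) = c * f x"
    and bound: "\<And>x. cmod (f x) \<le> K * cnorm x"
    and "f x1 = 1"
  obtains L where "f L = 1" "\<And>y. f y = 1 \<Longrightarrow> cnorm L \<le> cnorm y"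
proof -
  define N where "N = {cnorm y | y. f y = 1}"
  define D where "D = Inf N"
  have N_ne: "N \<noteq> {}" using \<open>f x1 = 1\<close> by (auto simp: N_def)
  have N_bdd: "bdd_below N"
    unfolding N_def using cnorm_nonneg by (intro bdd_belowI[of _ 0]) auto
  have D_le: "D \<le> cnorm y" if "f y = 1" for y
    unfolding D_def using that N_bdd by (intro cInf_lower) (auto simp: N_def)
  have D_nonneg: "0 \<le> D"
    unfolding D_def using N_ne cnorm_nonneg by (intro cInf_greatest) (auto simp: N_def)
  have "\<exists>y. f y = 1 \<and> cnorm y < D + inverse (real (Suc n))" for n
    using cInf_lessD[OF N_ne, of "D + inverse (real (Suc n))"] by (auto simp: D_def N_def)
  then obtain Y where Y: "\<And>n. f (Y n) = 1" and Y_less: "\<And>n. cnorm (Y n) < D + inverse (real (Suc n))"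
    by metis
  have upper: "(\<lambda>n. D + inverse (real (Suc n))) \<longlonglongrightarrow> D"
    using tendsto_add[OF tendsto_const LIMSEQ_inverse_real_of_nat, of D] by simp
  have Y_norm: "(\<lambda>n. cnorm (Y n)) \<longlonglongrightarrow> D"
    by (intro tendsto_sandwich[OF _ _ tendsto_const upper] always_eventually allI)
       (use D_le Y less_imp_le[OF Y_less] in auto)
  have diff_bound: "(cnorm (y - y'))^2 \<le> 2 * ((cnorm y)^2 - D^2) + 2 * ((cnorm y')^2 - D^2)"
    if "f y = 1" "f y' = 1" for y y'
  proof -
    have "f (scaleC (1/2) (y + y')) = 1" using that by (simp add: hom add)
    then have "2 * D \<le> cnorm (y + y')" using D_le by (fastforce simp: cnorm_scaleC)
    then have "(2 * D)^2 \<le> (cnorm (y + y'))^2" using D_nonneg by (intro power_mono) auto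
    then show ?thesis using cnorm_parallelogram[of y y'] by (simp add: power_mult_distrib)
  qed
  obtain L where L: "(\<lambda>n. cnorm (Y n - L)) \<longlonglongrightarrow> 0"
    using cnorm_convergent_if_diff_bound[OF Y_norm diff_bound[OF Y Y]] by blast
  have f_diff: "f (x - y) = f x - f y" for x y
    using add[of "x - y" y] by simp
  have "cmod (f L - 1) \<le> K * cnorm (Y n - L)" for n
    using bound[of "Y n - L"] Y[of n] by (simp add: f_diff norm_minus_commute)
  then have "cmod (f L - 1) \<le> 0"
    using LIMSEQ_le_const[OF tendsto_mult_right_zero[OF L, of K]] by blast
  then have fL: "f L = 1" by simp
  have "cnorm L \<le> cnorm (Y n) + cnorm (Y n - L)" for n
    using cnorm_triangle[of "Y n" "L - Y n"] cnorm_diff_commute[of L "Y n"] by simp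
  then have "cnorm L \<le> D"
    using LIMSEQ_le_const[OF tendsto_add[OF Y_norm L]] by simp
  then show ?thesis
    using that fL D_le by fastforce
qed

lemma cinner_eq_0_if_cnorm_minimal:
  assumes min: "\<And>t. cnorm L \<le> cnorm (L - scaleC t (x::'a::chilbert))"
  shows "cinner x L = 0"
proof -
  define c where "c = cinner x L"
  define s where "s = 1 / ((cnorm x)^2 + 1)"
  have "0 < (cnorm x)^2 + 1" by (simp add: add_nonneg_pos)
  then have s: "s > 0" "s * (cnorm x)^2 < 1"
    by (simp_all add: s_def field_simps)
  define t where "t = complex_of_real s * cnj c"
  have "complex_of_real ((cnorm (L - scaleC t x))^2) = cinner (L - scaleC t x) (L - scaleC t x)"
    by (rule cinner_self_of_cnorm[symmetric])
  also have "\<dots> = cinner L L - cnj t * cnj c - t * c + t * cnj t * cinner x x"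
    by (simp add: cinner_diff_left cinner_diff_right cinner_scaleC_left cinner_scaleC_right
        c_def algebra_simps flip: cinner_cnj[of x L])
  also have "\<dots> = complex_of_real ((cnorm L)^2 - s * (cmod c)^2 * (2 - s * (cnorm x)^2))"
  proof -
    have "c * cnj c = complex_of_real ((cmod c)^2)" by (rule complex_norm_square[symmetric])
    then have "t * c = complex_of_real (s * (cmod c)^2)" "cnj t * cnj c = complex_of_real (s * (cmod c)^2)"
      "t * cnj t = complex_of_real (s^2 * (cmod c)^2)"
      by (simp_all add: t_def mult_ac power2_eq_square)
    then show ?thesis by (simp add: cinner_self_of_cnorm algebra_simps power2_eq_square)
  qed
  finally have "(cnorm (L - scaleC t x))^2 = (cnorm L)^2 - s * (cmod c)^2 * (2 - s * (cnorm x)^2)"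
    by (simp only: of_real_eq_iff)
  moreover have "(cnorm L)^2 \<le> (cnorm (L - scaleC t x))^2"
    using min cnorm_nonneg by (intro power_mono) auto
  ultimately have "s * (cmod c)^2 * (2 - s * (cnorm x)^2) \<le> 0" by simp
  then have "(cmod c)^2 \<le> 0"
    using s by (simp add: mult_le_0_iff)
  then show ?thesis by (simp add: c_def)
qed

lemma riesz_representation:
  fixes f :: "'a::chilbert \<Rightarrow> complex"
  assumes add: "\<And>x y. f (x + y) = f x + f y"
    and hom: "\<And>c x. f (scaleC c x) = c * f x"
    and bound: "\<And>x. cmod (f x) \<le> K * cnorm x"
  obtains z where "\<And>x. f x = cinner x z"
proof (cases "\<forall>x. f x = 0")
  case True
  then show ?thesis using that[of 0] by simp
next
  case False
  then obtain x0 where "f x0 \<noteq> 0" by auto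
  then have "f (scaleC (1 / f x0) x0) = 1" by (simp add: hom)
  then obtain L where fL: "f L = 1" and min: "\<And>y. f y = 1 \<Longrightarrow> cnorm L \<le> cnorm y"
    using cnorm_minimizer_exists[OF add hom bound] by blast
  have f_diff: "f (x - y) = f x - f y" for x y
    using add[of "x - y" y] by simp
  have orth: "cinner x L = 0" if "f x = 0" for x
    by (rule cinner_eq_0_if_cnorm_minimal) (use that fL in \<open>simp add: min f_diff hom\<close>)
  have "L \<noteq> 0" using fL hom[of 0 0] by auto
  then have LL: "cinner L L \<noteq> 0" by (simp add: cinner_self_eq_0)
  have "f x = cinner x (scaleC (1 / cnj (cinner L L)) L)" for x
  proof -
    have "cinner (x - scaleC (f x) L) L = 0" by (rule orth) (simp add: f_diff hom fL)
    then have "cinner x L = f x * cinner L L" by (simp add: cinner_diff_left cinner_scaleC_left)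
    then show ?thesis using LL by (simp add: cinner_scaleC_right)
  qed
  then show ?thesis by (rule that)
qed

section \<open>Bounded operators and their adjoints\<close>

lemma bounded_op_add: "bounded_op A \<Longrightarrow> A (x + y) = A x + A y"
  unfolding bounded_op_def by blast

lemma bounded_op_scaleC: "bounded_op A \<Longrightarrow> A (scaleC c x) = scaleC c (A x)"
  unfolding bounded_op_def by blast

lemma bounded_op_bound: "bounded_op A \<Longrightarrow> \<exists>K. \<forall>x. cnorm (A x) \<le> K * cnorm x"
  unfolding bounded_op_def by blast

lemma bounded_op_0: "bounded_op (A::'a::chilbert \<Rightarrow> 'a) \<Longrightarrow> A 0 = 0"
  using bounded_op_scaleC[of A 0 0] by simp

lemma bounded_op_diff: "bounded_op (A::'a::chilbert \<Rightarrow> 'a) \<Longrightarrow> A (x - y) = A x - A y"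
  by (metis bounded_op_add diff_add_cancel eq_diff_eq)

lemma bounded_op_sum: "bounded_op (A::'a::chilbert \<Rightarrow> 'a) \<Longrightarrow> A (\<Sum>i\<in>I. f i) = (\<Sum>i\<in>I. A (f i))"
  by (induction I rule: infinite_finite_induct) (auto simp: bounded_op_0 bounded_op_add)

lemma bounded_op_sum_list:
  "bounded_op (A::'a::chilbert \<Rightarrow> 'a) \<Longrightarrow> A (sum_list (map f xs)) = sum_list (map (\<lambda>x. A (f x)) xs)"
  by (induction xs) (auto simp: bounded_op_0 bounded_op_add)

lemma bounded_op_id [simp]: "bounded_op (id :: 'a::chilbert \<Rightarrow> 'a)"
  unfolding bounded_op_def by (auto intro: exI[of _ 1])

lemma bounded_op_zero_map: "bounded_op (\<lambda>h::'a::chilbert. 0)"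
  unfolding bounded_op_def by (auto intro!: exI[of _ 0])

lemma bounded_op_comp:
  assumes "bounded_op (A::'a::chilbert \<Rightarrow> 'a)" "bounded_op B"
  shows "bounded_op (A \<circ> B)"
proof -
  obtain K1 where K1: "\<And>x. cnorm (A x) \<le> K1 * cnorm x" using bounded_op_bound[OF assms(1)] by blast
  obtain K2 where K2: "\<And>x. cnorm (B x) \<le> K2 * cnorm x" using bounded_op_bound[OF assms(2)] by blast
  have "cnorm (A (B x)) \<le> (\<bar>K1\<bar> * \<bar>K2\<bar>) * cnorm x" for x
  proof -
    have "cnorm (A (B x)) \<le> \<bar>K1\<bar> * cnorm (B x)"
      using K1[of "B x"] cnorm_nonneg[of "B x"] by (meson abs_ge_self mult_right_mono order_trans)
    also have "\<dots> \<le> \<bar>K1\<bar> * (\<bar>K2\<bar> * cnorm x)"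
      using K2[of x] cnorm_nonneg[of x]
      by (meson abs_ge_self abs_ge_zero mult_left_mono mult_right_mono order_trans)
    finally show ?thesis by (simp add: mult.assoc)
  qed
  then show ?thesis using assms unfolding bounded_op_def by auto
qed

lemma bounded_op_scaled:
  assumes "bounded_op (A::'a::chilbert \<Rightarrow> 'a)"
  shows "bounded_op (\<lambda>h. scaleC c (A h))"
proof -
  obtain K where K: "\<And>x. cnorm (A x) \<le> K * cnorm x" using bounded_op_bound[OF assms] by blast
  have "cnorm (scaleC c (A x)) \<le> (cmod c * K) * cnorm x" for x
    using K[of x] by (simp add: cnorm_scaleC mult.assoc mult_left_mono)
  moreover have "scaleC c (A (x + y)) = scaleC c (A x) + scaleC c (A y)" for x y
    using assms by (simp add: bounded_op_add scaleC_add_right)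
  moreover have "scaleC c (A (scaleC d x)) = scaleC d (scaleC c (A x))" for d x
    using assms by (simp add: bounded_op_scaleC scaleC_scaleC mult.commute)
  ultimately show ?thesis unfolding bounded_op_def by blast
qed

lemma bounded_op_funpow: "bounded_op (A::'a::chilbert \<Rightarrow> 'a) \<Longrightarrow> bounded_op (A ^^ n)"
  by (induction n) (auto simp: id_def[symmetric] intro: bounded_op_comp)

lemma bounded_op_sum_ops:
  assumes "\<And>i. i \<in> I \<Longrightarrow> bounded_op (B i :: 'a::chilbert \<Rightarrow> 'a)"
  shows "bounded_op (\<lambda>y. \<Sum>i\<in>I. B i y)"
  using assms
proof (induction I rule: infinite_finite_induct)
  case (insert i I)
  obtain K1 where K1: "\<And>x. cnorm (B i x) \<le> K1 * cnorm x"
    using bounded_op_bound insert.prems by blast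
  obtain K2 where K2: "\<And>x. cnorm (\<Sum>i\<in>I. B i x) \<le> K2 * cnorm x"
    using bounded_op_bound insert.IH insert.prems by blast
  have "cnorm (\<Sum>i\<in>insert i I. B i x) \<le> (K1 + K2) * cnorm x" for x
    using insert.hyps cnorm_triangle[of "B i x" "\<Sum>i\<in>I. B i x"] K1[of x] K2[of x]
    by (simp add: algebra_simps)
  then show ?case
    using insert.prems unfolding bounded_op_def
    by (auto simp: sum.distrib bounded_op_add bounded_op_scaleC scaleC_sum_right)
qed (simp_all add: bounded_op_zero_map)

lemma adj_exists:
  assumes A: "bounded_op (A::'a::chilbert \<Rightarrow> 'a)"
  shows "\<exists>B. bounded_op B \<and> (\<forall>x y. cinner (A x) y = cinner x (B y))"
proof -
  obtain K where K: "\<And>x. cnorm (A x) \<le> K * cnorm x" using bounded_op_bound[OF A] by blast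
  have "\<exists>z. \<forall>x. cinner (A x) y = cinner x z" for y
  proof -
    have bound: "cmod (cinner (A x) y) \<le> (K * cnorm y) * cnorm x" for x
      using cinner_bound[of "A x" y] mult_right_mono[OF K[of x] cnorm_nonneg[of y]]
      by (simp add: algebra_simps)
    obtain z where "\<And>x. cinner (A x) y = cinner x z"
      by (rule riesz_representation[of "\<lambda>x. cinner (A x) y", OF _ _ bound])
         (simp_all add: bounded_op_add[OF A] bounded_op_scaleC[OF A] cinner_add_left cinner_scaleC_left)
    then show ?thesis by blast
  qed
  then obtain B where B: "\<And>x y. cinner (A x) y = cinner x (B y)" by metis
  have B_add: "B (y + y') = B y + B y'" for y y'
    by (rule cinner_ext) (simp add: B[symmetric] cinner_add_right)
  have B_scaleC: "B (scaleC c y) = scaleC c (B y)" for c y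
    by (rule cinner_ext) (simp add: B[symmetric] cinner_scaleC_right)
  have sq: "cnorm (B y) * cnorm (B y) \<le> cnorm (B y) * (\<bar>K\<bar> * cnorm y)" for y
  proof -
    have "cnorm (B y) * cnorm (B y) = Re (cinner (A (B y)) y)"
      by (simp add: cnorm_sq B flip: power2_eq_square)
    also have "\<dots> \<le> cnorm (A (B y)) * cnorm y"
      using complex_Re_le_cmod cinner_bound order_trans by blast
    also have "\<dots> \<le> (\<bar>K\<bar> * cnorm (B y)) * cnorm y"
      using K[of "B y"] mult_right_mono[OF abs_ge_self cnorm_nonneg, of K "B y"]
      by (intro mult_right_mono cnorm_nonneg) linarith
    finally show ?thesis by (simp add: mult_ac)
  qed
  have "cnorm (B y) \<le> \<bar>K\<bar> * cnorm y" for y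
  proof (cases "cnorm (B y) = 0")
    case True
    then show ?thesis using cnorm_nonneg[of y] by simp
  next
    case False
    then show ?thesis using sq[of y] cnorm_nonneg[of "B y"] by simp
  qed
  then have "bounded_op B" unfolding bounded_op_def using B_add B_scaleC by blast
  then show ?thesis using B by blast
qed

lemma bounded_op_adj: "bounded_op (A::'a::chilbert \<Rightarrow> 'a) \<Longrightarrow> bounded_op (adj A)"
  unfolding adj_def by (rule conjunct1[OF someI_ex[OF adj_exists]])

lemma cinner_adj_right:
  assumes "bounded_op (A::'a::chilbert \<Rightarrow> 'a)"
  shows "cinner x (adj A y) = cinner (A x) y"
proof -
  have "\<forall>x y. cinner (A x) y = cinner x (adj A y)"
    using someI_ex[OF adj_exists[OF assms]] unfolding adj_def by blast
  then show ?thesis by simp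
qed

lemma cinner_adj_left:
  assumes "bounded_op (A::'a::chilbert \<Rightarrow> 'a)"
  shows "cinner (adj A x) y = cinner x (A y)"
proof -
  have "cinner (adj A x) y = cnj (cinner y (adj A x))" by (simp add: cinner_cnj)
  also have "\<dots> = cinner x (A y)" using assms by (simp add: cinner_adj_right cinner_cnj)
  finally show ?thesis .
qed

lemma adj_unique:
  assumes "bounded_op (A::'a::chilbert \<Rightarrow> 'a)" "\<And>x y. cinner (A x) y = cinner x (B y)"
  shows "adj A = B"
proof
  show "adj A y = B y" for y
    by (rule cinner_ext) (simp add: cinner_adj_right[OF assms(1)] assms(2))
qed

lemma adj_comp:
  assumes "bounded_op (A::'a::chilbert \<Rightarrow> 'a)" "bounded_op B"
  shows "adj (A \<circ> B) = adj B \<circ> adj A"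
  by (rule adj_unique[OF bounded_op_comp[OF assms]]) (simp add: cinner_adj_right assms)

lemma adj_id [simp]: "adj (id :: 'a::chilbert \<Rightarrow> 'a) = id"
  by (rule adj_unique) auto

lemma adj_zero_map: "adj (\<lambda>x::'a::chilbert. 0) = (\<lambda>x. 0)"
  by (rule adj_unique[OF bounded_op_zero_map]) simp

lemma adj_scaled:
  assumes "bounded_op (A::'a::chilbert \<Rightarrow> 'a)"
  shows "adj (\<lambda>h. scaleC c (A h)) = (\<lambda>h. scaleC (cnj c) (adj A h))"
  by (rule adj_unique[OF bounded_op_scaled[OF assms]])
     (simp add: cinner_scaleC_left cinner_scaleC_right cinner_adj_right[OF assms])

lemma adj_comp_eq_scaled:
  assumes "bounded_op (A::'a::chilbert \<Rightarrow> 'a)" "bounded_op B" "bounded_op C" "bounded_op D"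
    and "\<And>w. A (B w) = scaleC d (C (D w))"
  shows "adj B (adj A z) = scaleC (cnj d) (adj D (adj C z))"
proof -
  have AB: "A \<circ> B = (\<lambda>w. scaleC d ((C \<circ> D) w))"
    using assms(5) by auto
  have "adj B \<circ> adj A = adj (A \<circ> B)"
    using assms(1,2) by (simp add: adj_comp)
  also have "\<dots> = (\<lambda>z. scaleC (cnj d) ((adj D \<circ> adj C) z))"
    using assms(3,4) by (simp only: AB adj_scaled[OF bounded_op_comp] adj_comp)
  finally show ?thesis by (metis comp_apply)
qed

lemma adj_adj:
  assumes "bounded_op (A::'a::chilbert \<Rightarrow> 'a)"
  shows "adj (adj A) = A"
  by (rule adj_unique[OF bounded_op_adj[OF assms]]) (simp add: cinner_adj_left[OF assms])

definition gdc_inv :: "nat \<Rightarrow> gdc_elem \<Rightarrow> gdc_elem" where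
  "gdc_inv k x = ((\<lambda>i j. if 1 \<le> i \<and> i < j \<and> j \<le> k then - fst x i j - snd x i * snd x j else 0),
                  (\<lambda>i. - snd x i))"

lemma gdc_carrier_iff:
  "x \<in> gdc_carrier k \<longleftrightarrow> (\<forall>i j. \<not> (1 \<le> i \<and> i < j \<and> j \<le> k) \<longrightarrow> fst x i j = 0)
                          \<and> (\<forall>i. \<not> (1 \<le> i \<and> i \<le> k) \<longrightarrow> snd x i = 0)"
  by (cases x) (simp add: gdc_carrier_def)

lemma Gdc_simps [simp]:
  "carrier (Gdc k) = gdc_carrier k" "mult (Gdc k) = gdc_mult k" "one (Gdc k) = (\<lambda>i j. 0, \<lambda>i. 0)"
  by (simp_all add: Gdc_def)

lemma gdc_mult_fst:
  "fst (gdc_mult k x y) i j =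
     (if 1 \<le> i \<and> i < j \<and> j \<le> k then fst x i j + fst y i j - snd y i * snd x j else 0)"
  by (simp add: gdc_mult_def)

lemma gdc_mult_snd: "snd (gdc_mult k x y) i = snd x i + snd y i"
  by (simp add: gdc_mult_def)

lemma gdc_inv_fst:
  "fst (gdc_inv k x) i j = (if 1 \<le> i \<and> i < j \<and> j \<le> k then - fst x i j - snd x i * snd x j else 0)"
  by (simp add: gdc_inv_def)

lemma gdc_inv_snd: "snd (gdc_inv k x) i = - snd x i"
  by (simp add: gdc_inv_def)

lemma gdc_eqI: "(\<And>i j. fst x i j = fst y i j) \<Longrightarrow> (\<And>i. snd x i = snd y i) \<Longrightarrow> (x::gdc_elem) = y"
  by (cases x, cases y) (auto intro: ext)

lemma gdc_inv_closed:
  assumes "x \<in> carrier (Gdc k)"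
  shows "gdc_inv k x \<in> carrier (Gdc k)"
  using assms by (simp add: gdc_carrier_iff gdc_inv_fst gdc_inv_snd)

lemma gdc_inv_mult: "gdc_inv k x \<otimes>\<^bsub>Gdc k\<^esub> x = \<one>\<^bsub>Gdc k\<^esub>"
  by (intro gdc_eqI) (simp_all add: gdc_mult_fst gdc_mult_snd gdc_inv_fst gdc_inv_snd algebra_simps)

lemma group_Gdc: "group (Gdc k)"
proof (rule groupI)
  show "x \<otimes>\<^bsub>Gdc k\<^esub> y \<otimes>\<^bsub>Gdc k\<^esub> z = x \<otimes>\<^bsub>Gdc k\<^esub> (y \<otimes>\<^bsub>Gdc k\<^esub> z)" for x y z
    by (rule gdc_eqI) (simp_all add: gdc_mult_fst gdc_mult_snd algebra_simps)
  show "\<one>\<^bsub>Gdc k\<^esub> \<otimes>\<^bsub>Gdc k\<^esub> x = x" if "x \<in> carrier (Gdc k)" for x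
    using that by (intro gdc_eqI) (auto simp: gdc_mult_fst gdc_mult_snd gdc_carrier_iff)
  show "\<exists>y\<in>carrier (Gdc k). y \<otimes>\<^bsub>Gdc k\<^esub> x = \<one>\<^bsub>Gdc k\<^esub>" if "x \<in> carrier (Gdc k)" for x
    using that gdc_inv_closed gdc_inv_mult by fastforce
qed (simp_all add: gdc_carrier_iff gdc_mult_fst gdc_mult_snd)

lemma Gdc_inv: "x \<in> carrier (Gdc k) \<Longrightarrow> inv\<^bsub>Gdc k\<^esub> x = gdc_inv k x"
  by (rule group.inv_equality[OF group_Gdc gdc_inv_mult _ gdc_inv_closed])

section \<open>Ordered monomials in \<open>q\<close>-commuting operators\<close>

definition qprod :: "nat \<Rightarrow> (nat \<Rightarrow> nat \<Rightarrow> complex) \<Rightarrow> (nat \<Rightarrow> nat \<Rightarrow> int) \<Rightarrow> complex" where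
  "qprod n q f = (\<Prod>(i,j)\<in>{(i,j). 1 \<le> i \<and> i < j \<and> j \<le> n}. q i j powi f i j)"

lemma finite_index_pairs [simp]: "finite {(i,j). Suc 0 \<le> i \<and> i < j \<and> j \<le> (n::nat)}"
  by (rule finite_subset[of _ "{1..n} \<times> {1..n}"]) auto

lemma qprod_cong:
  "(\<And>i j. 1 \<le> i \<Longrightarrow> i < j \<Longrightarrow> j \<le> n \<Longrightarrow> f i j = g i j) \<Longrightarrow> qprod n q f = qprod n q g"
  unfolding qprod_def by (rule prod.cong) auto

lemma qprod_zero [simp]: "qprod n q (\<lambda>i j. 0) = 1"
  by (simp add: qprod_def)

lemma qprod_0 [simp]: "qprod 0 q f = 1"
proof -
  have "{(i,j). 1 \<le> i \<and> i < j \<and> j \<le> (0::nat)} = {}" by auto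
  then show ?thesis by (simp only: qprod_def) simp
qed

lemma qprod_Suc: "qprod (Suc n) q f = qprod n q f * (\<Prod>l\<in>{1..n}. q l (Suc n) powi f l (Suc n))"
proof -
  have "{(i,j). 1 \<le> i \<and> i < j \<and> j \<le> Suc n}
      = {(i,j). 1 \<le> i \<and> i < j \<and> j \<le> n} \<union> (\<lambda>l. (l, Suc n)) ` {1..n}"
    by auto
  then have "qprod (Suc n) q f
      = qprod n q f * (\<Prod>p\<in>(\<lambda>l. (l, Suc n)) ` {1..n}. case p of (i, j) \<Rightarrow> q i j powi f i j)"
    unfolding qprod_def by (simp only:) (rule prod.union_disjoint, auto)
  also have "(\<Prod>p\<in>(\<lambda>l. (l, Suc n)) ` {1..n}. case p of (i, j) \<Rightarrow> q i j powi f i j)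
      = (\<Prod>l\<in>{1..n}. q l (Suc n) powi f l (Suc n))"
    by (subst prod.reindex) (auto simp: inj_on_def)
  finally show ?thesis .
qed

lemma cnj_eq_inverse_if_unimodular: "cmod z = 1 \<Longrightarrow> cnj z = inverse z"
  by (metis complex_norm_square inverse_unique norm_one of_real_1 one_power2)

locale unimodular_coeffs =
  fixes k :: nat and q :: "nat \<Rightarrow> nat \<Rightarrow> complex"
  assumes q_unimodular: "\<And>i j. 1 \<le> i \<Longrightarrow> i < j \<Longrightarrow> j \<le> k \<Longrightarrow> cmod (q i j) = 1"
begin

lemma q_nonzero: "1 \<le> i \<Longrightarrow> i < j \<Longrightarrow> j \<le> k \<Longrightarrow> q i j \<noteq> 0"
  using q_unimodular by fastforce

lemma qprod_add: "qprod k q f * qprod k q g = qprod k q (\<lambda>i j. f i j + g i j)"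
  unfolding qprod_def prod.distrib[symmetric]
  by (rule prod.cong) (auto simp: power_int_add q_nonzero)

lemma qprod_cnj: "cnj (qprod k q f) = qprod k q (\<lambda>i j. - f i j)"
  unfolding qprod_def cnj_prod
  by (rule prod.cong)
     (auto simp: cnj_eq_inverse_if_unimodular q_unimodular power_int_minus power_int_inverse)

end

fun revprod :: "nat \<Rightarrow> (nat \<Rightarrow> 'a \<Rightarrow> 'a) \<Rightarrow> 'a \<Rightarrow> 'a" where
  "revprod 0 B = id"
| "revprod (Suc n) B = B (Suc n) \<circ> revprod n B"

lemma ordprod_cong: "(\<And>l. 1 \<le> l \<Longrightarrow> l \<le> n \<Longrightarrow> B l = B' l) \<Longrightarrow> ordprod n B = ordprod n B'"
  by (induction n) auto

lemma bounded_op_ordprod: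
  "(\<And>l. 1 \<le> l \<Longrightarrow> l \<le> n \<Longrightarrow> bounded_op (B l)) \<Longrightarrow> bounded_op (ordprod n (B :: nat \<Rightarrow> 'a::chilbert \<Rightarrow> 'a))"
  by (induction n) (auto intro!: bounded_op_comp)

lemma bounded_op_revprod:
  "(\<And>l. 1 \<le> l \<Longrightarrow> l \<le> n \<Longrightarrow> bounded_op (B l)) \<Longrightarrow> bounded_op (revprod n (B :: nat \<Rightarrow> 'a::chilbert \<Rightarrow> 'a))"
  by (induction n) (auto intro!: bounded_op_comp)

lemma adj_revprod:
  "(\<And>l. 1 \<le> l \<Longrightarrow> l \<le> n \<Longrightarrow> bounded_op (B l)) \<Longrightarrow>
    adj (revprod n (B :: nat \<Rightarrow> 'a::chilbert \<Rightarrow> 'a)) = ordprod n (\<lambda>l. adj (B l))"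
  by (induction n) (simp_all add: adj_comp bounded_op_revprod)

lemma funpow_commute_scaled:
  assumes A: "bounded_op (A::'a::chilbert \<Rightarrow> 'a)" and B: "bounded_op B"
    and AB: "\<And>x. A (B x) = scaleC c (B (A x))"
  shows "(A ^^ a) ((B ^^ b) x) = scaleC (c ^ (a * b)) ((B ^^ b) ((A ^^ a) x))"
proof -
  have A_pow: "A ((B ^^ b) x) = scaleC (c ^ b) ((B ^^ b) (A x))" for x
    by (induction b arbitrary: x)
       (simp_all add: scaleC_one AB bounded_op_scaleC[OF B] scaleC_scaleC)
  show ?thesis
    by (induction a arbitrary: x)
       (simp_all add: scaleC_one A_pow bounded_op_scaleC[OF A] scaleC_scaleC power_add mult.commute)
qed

locale q_commuting = unimodular_coeffs k q for k q +
  fixes T :: "nat \<Rightarrow> 'a::chilbert \<Rightarrow> 'a"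
  assumes bounded: "\<And>i. 1 \<le> i \<Longrightarrow> i \<le> k \<Longrightarrow> bounded_op (T i)"
    and commute: "\<And>i j. 1 \<le> i \<Longrightarrow> i < j \<Longrightarrow> j \<le> k \<Longrightarrow> T i \<circ> T j = (\<lambda>h. scaleC (q i j) (T j (T i h)))"
begin

lemma bounded_pow: "1 \<le> i \<Longrightarrow> i \<le> k \<Longrightarrow> bounded_op (T i ^^ b)"
  by (rule bounded_op_funpow[OF bounded])

lemma pow_commute:
  assumes "1 \<le> i" "i < j" "j \<le> k"
  shows "(T j ^^ b) ((T i ^^ a) x) = scaleC (q i j powi (- (int a * int b))) ((T i ^^ a) ((T j ^^ b) x))"
proof -
  have "(T i ^^ a) ((T j ^^ b) x) = scaleC (q i j ^ (a * b)) ((T j ^^ b) ((T i ^^ a) x))"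
    using assms fun_cong[OF commute[OF assms]]
    by (intro funpow_commute_scaled bounded) auto
  moreover have "q i j ^ (a * b) \<noteq> 0" using q_nonzero[OF assms] by simp
  ultimately show ?thesis
    by (simp add: scaleC_scaleC scaleC_one power_int_minus flip: of_nat_mult)
qed

definition ordpow :: "nat \<Rightarrow> (nat \<Rightarrow> nat) \<Rightarrow> 'a \<Rightarrow> 'a" where
  "ordpow n a = ordprod n (\<lambda>l. T l ^^ a l)"

lemma ordpow_0 [simp]: "ordpow 0 a = id"
  by (simp add: ordpow_def)

lemma ordpow_Suc: "ordpow (Suc n) a x = ordpow n a ((T (Suc n) ^^ a (Suc n)) x)"
  by (simp add: ordpow_def)

lemma ordpow_zero_exps: "ordpow n (\<lambda>l. 0) = id"
  by (induction n) (auto simp: ordpow_def)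

lemma ordpow_cong: "(\<And>l. 1 \<le> l \<Longrightarrow> l \<le> n \<Longrightarrow> a l = b l) \<Longrightarrow> ordpow n a = ordpow n b"
  unfolding ordpow_def by (rule ordprod_cong) simp

lemma bounded_op_ordpow: "n \<le> k \<Longrightarrow> bounded_op (ordpow n a)"
  unfolding ordpow_def by (rule bounded_op_ordprod) (auto intro: bounded_pow)

lemma pow_ordpow_commute:
  assumes "n < j" "j \<le> k"
  shows "(T j ^^ b) (ordpow n a x)
    = scaleC (\<Prod>l\<in>{1..n}. q l j powi (- (int (a l) * int b))) (ordpow n a ((T j ^^ b) x))"
  using assms(1)
proof (induction n arbitrary: x)
  case (Suc n)
  have "(T j ^^ b) (ordpow (Suc n) a x)
      = scaleC (\<Prod>l\<in>{1..n}. q l j powi (- (int (a l) * int b)))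
          (ordpow n a ((T j ^^ b) ((T (Suc n) ^^ a (Suc n)) x)))"
    using Suc by (simp add: ordpow_Suc)
  also have "(T j ^^ b) ((T (Suc n) ^^ a (Suc n)) x)
      = scaleC (q (Suc n) j powi (- (int (a (Suc n)) * int b))) ((T (Suc n) ^^ a (Suc n)) ((T j ^^ b) x))"
    using Suc.prems assms by (intro pow_commute) auto
  finally show ?case
    using Suc.prems assms
    by (simp add: bounded_op_scaleC[OF bounded_op_ordpow] scaleC_scaleC ordpow_Suc prod.cl_ivl_Suc
        mult.commute)
qed (simp add: scaleC_one)

lemma ordpow_mult:
  assumes "n \<le> k"
  shows "ordpow n a (ordpow n b x)
    = scaleC (qprod n q (\<lambda>i j. - (int (b i) * int (a j)))) (ordpow n (\<lambda>l. a l + b l) x)"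
  using assms
proof (induction n arbitrary: x)
  case (Suc n)
  have "ordpow (Suc n) a (ordpow (Suc n) b x)
      = ordpow n a ((T (Suc n) ^^ a (Suc n)) (ordpow n b ((T (Suc n) ^^ b (Suc n)) x)))"
    by (simp add: ordpow_Suc)
  also have "\<dots> = scaleC ((\<Prod>l\<in>{1..n}. q l (Suc n) powi (- (int (b l) * int (a (Suc n)))))
        * qprod n q (\<lambda>i j. - (int (b i) * int (a j)))) (ordpow (Suc n) (\<lambda>l. a l + b l) x)"
    using Suc by (simp add: pow_ordpow_commute bounded_op_scaleC[OF bounded_op_ordpow] funpow_add
        scaleC_scaleC ordpow_Suc)
  finally show ?case by (simp add: qprod_Suc mult.commute)
qed (simp add: scaleC_one)

lemma revprod_pow:
  assumes "n \<le> k"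
  shows "revprod n (\<lambda>l. T l ^^ a l) x = scaleC (qprod n q (\<lambda>i j. - (int (a i) * int (a j)))) (ordpow n a x)"
  using assms
proof (induction n arbitrary: x)
  case (Suc n)
  then have "revprod (Suc n) (\<lambda>l. T l ^^ a l) x
      = scaleC (qprod n q (\<lambda>i j. - (int (a i) * int (a j)))) ((T (Suc n) ^^ a (Suc n)) (ordpow n a x))"
    by (simp add: bounded_op_scaleC[OF bounded_pow])
  also have "\<dots> = scaleC (qprod (Suc n) q (\<lambda>i j. - (int (a i) * int (a j)))) (ordpow (Suc n) a x)"
    using Suc.prems by (simp add: pow_ordpow_commute scaleC_scaleC ordpow_Suc qprod_Suc)
  finally show ?case .
qed (simp add: scaleC_one)

end

definition gram :: "('a::chilbert \<Rightarrow> 'a) \<Rightarrow> 'a \<Rightarrow> 'a" where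
  "gram A x = adj A (A x)"

lemma bounded_op_gram: "bounded_op (A::'a::chilbert \<Rightarrow> 'a) \<Longrightarrow> bounded_op (gram A)"
  using bounded_op_comp[OF bounded_op_adj] by (simp add: gram_def[abs_def] comp_def)

lemma pos_neg_part_split: "x = int (pos_part x) - int (neg_part x)" "pos_part x = 0 \<or> neg_part x = 0"
  by (auto simp: pos_part_def neg_part_def)

lemma pos_neg_part_eq:
  assumes "m = int p - int n" "p = 0 \<or> n = 0"
  shows "pos_part m = p" "neg_part m = n"
  using assms by (auto simp: pos_part_def neg_part_def)

context q_commuting
begin

lemma ordprod_adj_pow:
  "ordprod k (\<lambda>l. adj (T l ^^ a l)) = (\<lambda>x. scaleC (qprod k q (\<lambda>i j. int (a i) * int (a j))) (adj (ordpow k a) x))"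
proof -
  have "ordprod k (\<lambda>l. adj (T l ^^ a l)) = adj (revprod k (\<lambda>l. T l ^^ a l))"
    by (rule adj_revprod[symmetric]) (simp add: bounded_pow)
  also have "revprod k (\<lambda>l. T l ^^ a l) = (\<lambda>x. scaleC (qprod k q (\<lambda>i j. - (int (a i) * int (a j)))) (ordpow k a x))"
    by (rule ext) (simp add: revprod_pow)
  finally show ?thesis
    by (simp add: adj_scaled bounded_op_ordpow qprod_cnj)
qed

lemma Tdc_eq:
  assumes "\<And>l. snd m l = int (p l) - int (n l)" "\<And>l. p l = 0 \<or> n l = 0"
  shows "Tdc k q T m x = scaleC (qprod k q (\<lambda>i j. fst m i j - int (p i) * int (n j) + int (n i) * int (n j)))
      (adj (ordpow k n) (ordpow k p x))"
proof -
  have "pos_part (snd m l) = p l" "neg_part (snd m l) = n l" for l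
    using pos_neg_part_eq[OF assms(1) assms(2)] by auto
  then have "Tdc k q T m x = scaleC (qprod k q (fst m) * qprod k q (\<lambda>i j. - (int (p i) * int (n j))))
      (ordprod k (\<lambda>l. adj (T l ^^ n l)) (ordpow k p x))"
    unfolding Tdc_def qprod_def[symmetric] by (simp add: ordpow_def)
  then show ?thesis
    by (simp add: ordprod_adj_pow scaleC_scaleC qprod_add)
qed

lemma bounded_op_Tdc: "bounded_op (Tdc k q T m)"
proof -
  define p where "p l = pos_part (snd m l)" for l
  define n where "n l = neg_part (snd m l)" for l
  have eq: "Tdc k q T m = (\<lambda>x. scaleC (qprod k q (\<lambda>i j. fst m i j - int (p i) * int (n j) + int (n i) * int (n j)))
      ((adj (ordpow k n) \<circ> ordpow k p) x))"
    unfolding p_def n_def by (rule ext) (simp add: Tdc_eq[OF pos_neg_part_split])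
  have "bounded_op (adj (ordpow k n) \<circ> ordpow k p)"
    by (simp add: bounded_op_comp bounded_op_adj bounded_op_ordpow)
  then show ?thesis
    unfolding eq by (rule bounded_op_scaled)
qed

lemma Tdc_inv:
  assumes "s \<in> carrier (Gdc k)"
  shows "Tdc k q T (inv\<^bsub>Gdc k\<^esub> s) = adj (Tdc k q T s)"
proof -
  define p where "p l = pos_part (snd s l)" for l
  define n where "n l = neg_part (snd s l)" for l
  have s_split: "snd s l = int (p l) - int (n l)" "p l = 0 \<or> n l = 0" for l
    unfolding p_def n_def by (rule pos_neg_part_split)+
  define c where "c = qprod k q (\<lambda>i j. fst s i j - int (p i) * int (n j) + int (n i) * int (n j))"
  have Ts: "Tdc k q T s = (\<lambda>x. scaleC c ((adj (ordpow k n) \<circ> ordpow k p) x))"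
    by (rule ext) (simp add: Tdc_eq[OF s_split] c_def)
  have "adj (Tdc k q T s) = (\<lambda>x. scaleC (cnj c) (adj (adj (ordpow k n) \<circ> ordpow k p) x))"
    unfolding Ts by (intro adj_scaled bounded_op_comp bounded_op_adj bounded_op_ordpow order_refl)
  also have "adj (adj (ordpow k n) \<circ> ordpow k p) = adj (ordpow k p) \<circ> ordpow k n"
    by (simp add: adj_comp adj_adj bounded_op_adj bounded_op_ordpow)
  finally have "adj (Tdc k q T s) x = scaleC (cnj c) (adj (ordpow k p) (ordpow k n x))" for x
    by simp
  moreover have "Tdc k q T (inv\<^bsub>Gdc k\<^esub> s) x = scaleC (cnj c) (adj (ordpow k p) (ordpow k n x))" for x
  proof -
    have "snd (gdc_inv k s) l = int (n l) - int (p l)" "n l = 0 \<or> p l = 0" for l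
      using s_split[of l] by (auto simp: gdc_inv_snd)
    moreover have "qprod k q (\<lambda>i j. fst (gdc_inv k s) i j - int (n i) * int (p j) + int (p i) * int (p j)) = cnj c"
      unfolding c_def qprod_cnj by (rule qprod_cong) (simp add: gdc_inv_fst s_split(1) algebra_simps)
    ultimately show ?thesis
      using assms by (simp add: Gdc_inv Tdc_eq)
  qed
  ultimately show ?thesis by auto
qed

lemma Tdc_gdc_e: "Tdc k q T (gdc_e k v) = ordpow k (\<lambda>l. of_bool (l \<in> v))"
proof
  fix x
  define e where "e l = (of_bool (l \<in> v \<and> 1 \<le> l \<and> l \<le> k) :: nat)" for l
  have e: "snd (gdc_e k v) l = int (e l) - int 0" "e l = 0 \<or> 0 = (0::nat)" for l
    by (auto simp: gdc_e_def e_def)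
  have "Tdc k q T (gdc_e k v) x = ordpow k e x"
    using Tdc_eq[OF e, of x] by (simp add: ordpow_zero_exps scaleC_one gdc_e_def)
  also have "ordpow k e = ordpow k (\<lambda>l. of_bool (l \<in> v))"
    by (rule ordpow_cong) (simp add: e_def)
  finally show "Tdc k q T (gdc_e k v) x = ordpow k (\<lambda>l. of_bool (l \<in> v)) x" .
qed

lemma S_op_eq:
  "S_op k q T u = (\<lambda>y. \<Sum>v\<in>Pow u. scaleC ((-1) ^ card v) (gram (ordpow k (\<lambda>l. of_bool (l \<in> v))) y))"
  by (simp add: S_op_def Tdc_gdc_e gram_def)

lemma bounded_op_S_op: "bounded_op (S_op k q T u)"
  unfolding S_op_eq
  by (intro bounded_op_sum_ops bounded_op_scaled bounded_op_gram bounded_op_ordpow) simp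

end

section \<open>A telescoping decomposition of the identity\<close>

lemma sum_Pow_insert:
  assumes "finite u" "c \<notin> u"
  shows "(\<Sum>v\<in>Pow (insert c u). f v) = (\<Sum>v\<in>Pow u. f v + f (insert c v))"
proof -
  have "inj_on (insert c) (Pow u)"
    using assms(2) by (intro inj_onI) (metis Diff_insert_absorb PowD in_mono)
  moreover have "Pow u \<inter> insert c ` Pow u = {}" using assms(2) by auto
  ultimately show ?thesis
    using assms(1) by (simp add: Pow_insert sum.union_disjoint sum.reindex sum.distrib)
qed

lemma sum_list_swap:
  "(\<Sum>x\<leftarrow>xs. \<Sum>y\<leftarrow>ys. f x y) = (\<Sum>y\<leftarrow>ys. \<Sum>x\<leftarrow>xs. (f x y :: 'b::comm_monoid_add))"
  by (induction xs) (auto simp: sum_list_addf)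

lemma sum_list_map_concat: "(\<Sum>x\<leftarrow>concat xss. f x) = (\<Sum>xs\<leftarrow>xss. \<Sum>x\<leftarrow>xs. f x)"
  by (induction xss) auto

lemma sum_list_telescope:
  fixes g :: "nat \<Rightarrow> 'b::ab_group_add"
  assumes "m \<le> M"
  shows "(\<Sum>r\<leftarrow>[0..<Suc M]. if r \<le> m then g (m - r) - g (m - r + 1) else 0) = g 0 - g (m + 1)"
proof -
  have "(\<Sum>r\<leftarrow>[0..<Suc M]. if r \<le> m then g (m - r) - g (m - r + 1) else 0)
      = (\<Sum>r\<in>{0..<Suc M}. if r \<le> m then g (m - r) - g (m - r + 1) else 0)"
    by (simp add: sum_set_upt_conv_sum_list_nat[symmetric])
  also have "\<dots> = (\<Sum>r\<in>{0..m}. g (m - r) - g (m - r + 1))"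
    using assms by (intro sum.mono_neutral_cong_right) auto
  also have "\<dots> = (\<Sum>p\<in>{0..m}. g p - g (p + 1))"
    by (rule sum.reindex_bij_witness[of _ "\<lambda>p. m - p" "\<lambda>r. m - r"]) auto
  also have "\<dots> = - (\<Sum>p\<in>{0..m}. g (Suc p) - g p)"
    by (simp add: sum_negf[symmetric])
  also have "\<dots> = g 0 - g (m + 1)"
    by (subst sum_Suc_diff) auto
  finally show ?thesis .
qed

(* An index l in u with n l = r selects the r-th difference of the telescoping sum for T_l,
   an index l outside u its first term. *)
fun decomp_indices :: "(nat \<Rightarrow> nat) \<Rightarrow> nat \<Rightarrow> (nat set \<times> (nat \<Rightarrow> nat)) list" where
  "decomp_indices M 0 = [({}, \<lambda>_. 0)]"
| "decomp_indices M (Suc j) = concat (map (\<lambda>(u, n). (u, n) #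
     map (\<lambda>r. (insert (Suc j) u, n(Suc j := r))) [0..<Suc (M (Suc j))]) (decomp_indices M j))"

lemma decomp_indices_support:
  "(u, n) \<in> set (decomp_indices M j) \<Longrightarrow> u \<subseteq> {1..j} \<and> (\<forall>l. l \<notin> u \<longrightarrow> n l = 0)"
proof (induction j arbitrary: u n)
  case (Suc j)
  from Suc.prems obtain u' n' where un': "(u', n') \<in> set (decomp_indices M j)"
    and "(u, n) \<in> set ((u', n') # map (\<lambda>r. (insert (Suc j) u', n'(Suc j := r))) [0..<Suc (M (Suc j))])"
    by (simp only: decomp_indices.simps set_concat set_map) fastforce
  then have "(u, n) = (u', n') \<or> (\<exists>r. (u, n) = (insert (Suc j) u', n'(Suc j := r)))"
    by (simp only: list.set set_map insert_iff image_iff) blast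
  with Suc.IH[OF un'] show ?case by auto
qed simp

lemma sum_list_decomp_indices_Suc:
  "(\<Sum>p\<leftarrow>decomp_indices M (Suc j). f p) = (\<Sum>(u, n)\<leftarrow>decomp_indices M j.
     f (u, n) + (\<Sum>r\<leftarrow>[0..<Suc (M (Suc j))]. f (insert (Suc j) u, n(Suc j := r))))"
  by (simp add: sum_list_map_concat o_def split_def del: upt_Suc)

definition decomp_exp :: "(nat \<Rightarrow> nat) \<Rightarrow> nat set \<Rightarrow> (nat \<Rightarrow> nat) \<Rightarrow> nat set \<Rightarrow> nat \<Rightarrow> nat" where
  "decomp_exp m u n v l = (if l \<in> u then m l - n l + of_bool (l \<in> v) else m l + 1)"

context q_commuting
begin

lemma gram_ordpow_Suc:
  assumes "Suc j \<le> k"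
  shows "gram (ordpow (Suc j) a) x
    = adj (T (Suc j) ^^ a (Suc j)) (gram (ordpow j a) ((T (Suc j) ^^ a (Suc j)) x))"
proof -
  have "ordpow (Suc j) a = ordpow j a \<circ> (T (Suc j) ^^ a (Suc j))"
    by (simp add: ordpow_def)
  then show ?thesis
    using assms by (simp add: gram_def adj_comp bounded_op_ordpow bounded_pow)
qed

definition decomp_term :: "nat \<Rightarrow> (nat \<Rightarrow> nat) \<Rightarrow> nat set \<Rightarrow> (nat \<Rightarrow> nat) \<Rightarrow> 'a \<Rightarrow> 'a" where
  "decomp_term j m u n y = (if \<forall>l. n l \<le> m l
     then \<Sum>v\<in>Pow u. scaleC ((-1) ^ card v) (gram (ordpow j (decomp_exp m u n v)) y) else 0)"

lemma decomp_term_Suc_outside: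
  assumes "Suc j \<le> k" "Suc j \<notin> u"
  shows "decomp_term (Suc j) m u n y = adj (T (Suc j) ^^ (m (Suc j) + 1))
    (decomp_term j m u n ((T (Suc j) ^^ (m (Suc j) + 1)) y))"
  using assms bounded_op_adj[OF bounded_pow, of "Suc j"]
  by (simp add: decomp_term_def decomp_exp_def gram_ordpow_Suc bounded_op_sum bounded_op_scaleC
      bounded_op_0 del: funpow.simps)

lemma decomp_term_Suc_insert:
  assumes "Suc j \<le> k" "Suc j \<notin> u" "finite u" "n (Suc j) = 0"
  defines "c \<equiv> Suc j"
  shows "decomp_term c m (insert c u) (n(c := r)) y =
    (if r \<le> m c then adj (T c ^^ (m c - r)) (decomp_term j m u n ((T c ^^ (m c - r)) y))
                   - adj (T c ^^ (m c - r + 1)) (decomp_term j m u n ((T c ^^ (m c - r + 1)) y))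
     else 0)"
proof -
  have c: "c \<le> k" "c \<notin> u" using assms by auto
  have adj_pow: "bounded_op (adj (T c ^^ p))" for p
    using c by (intro bounded_op_adj bounded_pow) (auto simp: c_def)
  have bound: "(\<forall>l. (n(c := r)) l \<le> m l) \<longleftrightarrow> r \<le> m c \<and> (\<forall>l. n l \<le> m l)"
    using assms(4) unfolding c_def by (metis fun_upd_apply zero_le)
  have low: "ordpow j (decomp_exp m (insert c u) (n(c := r)) v) = ordpow j (decomp_exp m u n (v - {c}))" for v
    by (rule ordpow_cong) (auto simp: decomp_exp_def c_def)
  have top: "decomp_exp m (insert c u) (n(c := r)) v c = m c - r"
    "decomp_exp m (insert c u) (n(c := r)) (insert c v) c = m c - r + 1" if "v \<subseteq> u" for v
    using that c by (auto simp: decomp_exp_def)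
  have card: "card (insert c v) = Suc (card v)" if "v \<subseteq> u" for v
    using that c assms(3) by (meson card_insert_disjoint finite_subset subsetD)
  have "v \<subseteq> u \<Longrightarrow> insert c v - {c} = v" "v \<subseteq> u \<Longrightarrow> v - {c} = v" for v
    using c by auto
  then show ?thesis
    using bound assms(3) c card
    by (auto simp: decomp_term_def sum_Pow_insert gram_ordpow_Suc[of j, folded c_def] low top
        bounded_op_sum[OF adj_pow] bounded_op_scaleC[OF adj_pow] bounded_op_diff[OF adj_pow]
        bounded_op_0[OF adj_pow] sum_subtractf scaleC_minus_left simp del: funpow.simps intro!: sum.cong)
qed

lemma decomp_terms_Suc:
  assumes "Suc j \<le> k" "(u, n) \<in> set (decomp_indices M j)"
  defines "c \<equiv> Suc j"
  shows "decomp_term c m u n y + (\<Sum>r\<leftarrow>[0..<Suc (M c)]. decomp_term c m (insert c u) (n(c := r)) y)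
    = adj (T c ^^ (m c + 1)) (decomp_term j m u n ((T c ^^ (m c + 1)) y))
        + (\<Sum>r\<leftarrow>[0..<Suc (M c)]. if r \<le> m c
            then adj (T c ^^ (m c - r)) (decomp_term j m u n ((T c ^^ (m c - r)) y))
               - adj (T c ^^ (m c - r + 1)) (decomp_term j m u n ((T c ^^ (m c - r + 1)) y))
            else 0)"
proof -
  have "u \<subseteq> {1..j}" "\<forall>l. l \<notin> u \<longrightarrow> n l = 0"
    using assms(2) decomp_indices_support by blast+
  moreover from this(1) have "finite u" by (rule finite_subset) simp
  ultimately have "decomp_term c m u n y = adj (T c ^^ (m c + 1)) (decomp_term j m u n ((T c ^^ (m c + 1)) y))"
    "decomp_term c m (insert c u) (n(c := r)) y = (if r \<le> m c
            then adj (T c ^^ (m c - r)) (decomp_term j m u n ((T c ^^ (m c - r)) y))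
               - adj (T c ^^ (m c - r + 1)) (decomp_term j m u n ((T c ^^ (m c - r + 1)) y))
            else 0)" for r
    unfolding c_def using assms(1) by (intro decomp_term_Suc_outside decomp_term_Suc_insert; force)+
  then show ?thesis by (simp only:)
qed

definition decomp_sum :: "nat \<Rightarrow> (nat \<Rightarrow> nat) \<Rightarrow> (nat \<Rightarrow> nat) \<Rightarrow> 'a \<Rightarrow> 'a" where
  "decomp_sum j M m y = (\<Sum>(u, n)\<leftarrow>decomp_indices M j. decomp_term j m u n y)"

lemma decomp_sum_Suc:
  assumes "Suc j \<le> k"
  defines "c \<equiv> Suc j"
  shows "decomp_sum c M m y = adj (T c ^^ (m c + 1)) (decomp_sum j M m ((T c ^^ (m c + 1)) y))
    + (\<Sum>r\<leftarrow>[0..<Suc (M c)]. if r \<le> m c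
        then adj (T c ^^ (m c - r)) (decomp_sum j M m ((T c ^^ (m c - r)) y))
           - adj (T c ^^ (m c - r + 1)) (decomp_sum j M m ((T c ^^ (m c - r + 1)) y))
        else 0)"
proof -
  let ?L = "decomp_indices M j" and ?D = "decomp_term j m"
  have pull: "(\<Sum>p\<leftarrow>?L. adj (T c ^^ e) (?D (fst p) (snd p) ((T c ^^ e) y)))
      = adj (T c ^^ e) (decomp_sum j M m ((T c ^^ e) y))" for e
  proof -
    have "bounded_op (adj (T c ^^ e))"
      using assms by (intro bounded_op_adj bounded_pow) auto
    then show ?thesis
      by (simp add: bounded_op_sum_list decomp_sum_def split_def)
  qed
  have "decomp_sum c M m y = (\<Sum>(u, n)\<leftarrow>?L. decomp_term c m u n y
      + (\<Sum>r\<leftarrow>[0..<Suc (M c)]. decomp_term c m (insert c u) (n(c := r)) y))"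
    unfolding decomp_sum_def c_def sum_list_decomp_indices_Suc by (simp add: split_def del: upt_Suc)
  also have "\<dots> = (\<Sum>(u, n)\<leftarrow>?L. adj (T c ^^ (m c + 1)) (?D u n ((T c ^^ (m c + 1)) y))
      + (\<Sum>r\<leftarrow>[0..<Suc (M c)]. if r \<le> m c
          then adj (T c ^^ (m c - r)) (?D u n ((T c ^^ (m c - r)) y))
             - adj (T c ^^ (m c - r + 1)) (?D u n ((T c ^^ (m c - r + 1)) y))
          else 0))"
    by (intro arg_cong[where f = sum_list] map_cong refl)
       (auto simp: decomp_terms_Suc[OF assms(1), folded c_def] simp del: upt_Suc)
  moreover have "(\<Sum>p\<leftarrow>?L. if r \<le> m c
        then adj (T c ^^ (m c - r)) (?D (fst p) (snd p) ((T c ^^ (m c - r)) y))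
           - adj (T c ^^ (m c - r + 1)) (?D (fst p) (snd p) ((T c ^^ (m c - r + 1)) y))
        else 0)
      = (if r \<le> m c then adj (T c ^^ (m c - r)) (decomp_sum j M m ((T c ^^ (m c - r)) y))
           - adj (T c ^^ (m c - r + 1)) (decomp_sum j M m ((T c ^^ (m c - r + 1)) y)) else 0)" for r
    by (cases "r \<le> m c") (simp_all add: sum_list_subtractf pull del: funpow.simps)
  ultimately show ?thesis
    by (simp add: split_def sum_list_addf pull sum_list_swap[where xs = ?L] del: funpow.simps upt_Suc)
qed

lemma decomp_sum_eq:
  assumes "j \<le> k" "\<And>l. m l \<le> M l"
  shows "decomp_sum j M m y = y"
  using assms(1)
proof (induction j arbitrary: y)
  case 0
  then show ?case by (simp add: decomp_sum_def decomp_term_def ordpow_def gram_def scaleC_one)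
next
  case (Suc j)
  then have "decomp_sum (Suc j) M m y = gram (T (Suc j) ^^ (m (Suc j) + 1)) y
    + (\<Sum>r\<leftarrow>[0..<Suc (M (Suc j))]. if r \<le> m (Suc j)
        then gram (T (Suc j) ^^ (m (Suc j) - r)) y - gram (T (Suc j) ^^ (m (Suc j) - r + 1)) y else 0)"
    by (simp add: decomp_sum_Suc gram_def del: funpow.simps upt_Suc cong: if_cong)
  also have "\<dots> = y"
    using sum_list_telescope[OF assms(2), of "Suc j" "\<lambda>p. gram (T (Suc j) ^^ p) y"] by (simp add: gram_def)
  finally show ?case .
qed

end

section \<open>Positivity of the \<open>S(u)\<close> implies positive definiteness\<close>

definition factor_exp :: "(nat \<Rightarrow> int) \<Rightarrow> nat set \<Rightarrow> (nat \<Rightarrow> nat) \<Rightarrow> gdc_elem \<Rightarrow> nat \<Rightarrow> nat" where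
  "factor_exp L u n s l = of_bool (l \<notin> u) + nat (snd s l - L l) - n l"

context q_commuting
begin

lemma ordpow_split:
  assumes "\<And>l. e l + f l = c l + d l"
  shows "ordpow k e (ordpow k f w)
    = scaleC (qprod k q (\<lambda>i j. int (d i) * int (c j) - int (f i) * int (e j))) (ordpow k c (ordpow k d w))"
proof -
  have "ordpow k (\<lambda>l. c l + d l) w
      = scaleC (qprod k q (\<lambda>i j. int (d i) * int (c j))) (ordpow k c (ordpow k d w))"
    by (simp add: ordpow_mult scaleC_scaleC qprod_add scaleC_one)
  have "ordpow k e (ordpow k f w)
      = scaleC (qprod k q (\<lambda>i j. - (int (f i) * int (e j)))) (ordpow k (\<lambda>l. c l + d l) w)"
    using assms by (simp add: ordpow_mult)
  also note \<open>ordpow k (\<lambda>l. c l + d l) w = _\<close>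
  finally show ?thesis
    by (simp add: scaleC_scaleC qprod_add algebra_simps)
qed

lemma adj_ordpow_gram_ordpow:
  assumes "\<And>l. e l + f l = c l + \<alpha> l" "\<And>l. e l + g l = c l + \<beta> l"
  shows "adj (ordpow k g) (gram (ordpow k e) (ordpow k f x))
    = scaleC (cnj (qprod k q (\<lambda>i j. int (\<beta> i) * int (c j) - int (g i) * int (e j)))
        * qprod k q (\<lambda>i j. int (\<alpha> i) * int (c j) - int (f i) * int (e j)))
      (adj (ordpow k \<beta>) (gram (ordpow k c) (ordpow k \<alpha> x)))"
proof -
  have P: "bounded_op (ordpow k a)" for a
    by (simp add: bounded_op_ordpow)
  have "adj (ordpow k g) (adj (ordpow k e) z)
      = scaleC (cnj (qprod k q (\<lambda>i j. int (\<beta> i) * int (c j) - int (g i) * int (e j))))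
          (adj (ordpow k \<beta>) (adj (ordpow k c) z))" for z
    by (rule adj_comp_eq_scaled[OF P P P P ordpow_split[OF assms(2)]])
  then show ?thesis
    using bounded_op_adj[OF P]
    by (simp add: gram_def ordpow_split[OF assms(1)] bounded_op_scaleC scaleC_scaleC mult.commute)
qed

definition factor_coeff :: "(nat \<Rightarrow> int) \<Rightarrow> nat set \<Rightarrow> (nat \<Rightarrow> nat) \<Rightarrow> gdc_elem \<Rightarrow> complex" where
  "factor_coeff L u n s =
     qprod k q (\<lambda>i j. fst s i j + (snd s i - L i) * (L j + int (n j) - of_bool (j \<notin> u)))"

(* The factors of the kernel: T(t^-1 s) = SUM (u,n). factor(t)^* S(u) factor(s) for s, t >= L
   (sum_factors_eq_Tdc). *)
definition factor :: "(nat \<Rightarrow> int) \<Rightarrow> nat set \<Rightarrow> (nat \<Rightarrow> nat) \<Rightarrow> gdc_elem \<Rightarrow> 'a \<Rightarrow> 'a" where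
  "factor L u n s = (if \<forall>l. int (n l) \<le> snd s l - L l
     then (\<lambda>x. scaleC (factor_coeff L u n s) (ordpow k (factor_exp L u n s) x)) else (\<lambda>x. 0))"

lemma bounded_op_factor: "bounded_op (factor L u n s)"
  by (simp add: factor_def bounded_op_scaled bounded_op_ordpow bounded_op_zero_map)

lemma factor_coeff_mult:
  assumes L: "\<And>l. L l \<le> snd s l" "\<And>l. L l \<le> snd t l"
    and u: "v \<subseteq> u" "\<And>l. l \<notin> u \<Longrightarrow> n l = 0"
  defines "a \<equiv> \<lambda>l. nat (snd s l - L l)" and "b \<equiv> \<lambda>l. nat (snd t l - L l)"
  defines "m \<equiv> \<lambda>l. min (a l) (b l)"
  assumes n: "\<And>l. n l \<le> m l"
  defines "e \<equiv> \<lambda>l. of_bool (l \<in> v) :: nat" and "c \<equiv> decomp_exp m u n v"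
  shows "cnj (factor_coeff L u n t) * factor_coeff L u n s
      * (cnj (qprod k q (\<lambda>i j. int (b i - a i) * int (c j) - int (factor_exp L u n t i) * int (e j)))
         * qprod k q (\<lambda>i j. int (a i - b i) * int (c j) - int (factor_exp L u n s i) * int (e j)))
    = qprod k q (\<lambda>i j. fst s i j - fst t i j + (int (a i) - int (b i)) * (L j + int (m j)))"
proof -
  have a: "snd s l - L l = int (a l)" and b: "snd t l - L l = int (b l)" for l
    using L by (auto simp: a_def b_def)
  have n_le: "n l \<le> a l" "n l \<le> b l" for l
    using n[of l] by (auto simp: m_def)
  have \<alpha>: "int (a i - b i) = int (a i) - int (b i) + int (b i - a i)" for i
    by simp
  have Et: "int (factor_exp L u n t i) = int (factor_exp L u n s i) + int (b i) - int (a i)" for i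
    using n_le[of i] by (simp add: factor_exp_def a_def b_def of_nat_diff)
  have m: "int (m j) = int (c j) - int (e j) + int (n j) - of_bool (j \<notin> u)" for j
    using u n_le[of j] by (auto simp: c_def e_def decomp_exp_def m_def)
  show ?thesis
    unfolding factor_coeff_def qprod_cnj mult.assoc qprod_add
    by (intro qprod_cong) (simp add: a b \<alpha> Et m algebra_simps)
qed

lemma adj_factor_S_op_factor_eq_0:
  assumes "\<And>l. L l \<le> snd s l" "\<And>l. L l \<le> snd t l"
    and "\<not> (\<forall>l. n l \<le> min (nat (snd s l - L l)) (nat (snd t l - L l)))"
  shows "adj (factor L u n t) (S_op k q T u (factor L u n s x)) = 0"
proof -
  obtain l where "\<not> n l \<le> min (nat (snd s l - L l)) (nat (snd t l - L l))"
    using assms(3) by auto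
  then have "\<not> int (n l) \<le> snd s l - L l \<or> \<not> int (n l) \<le> snd t l - L l"
    using assms(1,2)[of l] by auto
  then have "factor L u n s = (\<lambda>_. 0) \<or> factor L u n t = (\<lambda>_. 0)"
    by (auto simp: factor_def)
  then show ?thesis
    using bounded_op_S_op bounded_op_0[OF bounded_op_adj[OF bounded_op_factor[of L u n t]]]
    by (auto simp: adj_zero_map bounded_op_0)
qed

lemma adj_factor_S_op_factor_expand:
  assumes "\<forall>l. int (n l) \<le> snd s l - L l" "\<forall>l. int (n l) \<le> snd t l - L l"
  shows "adj (factor L u n t) (S_op k q T u (factor L u n s x)) = (\<Sum>v\<in>Pow u. scaleC ((-1) ^ card v)
      (scaleC (cnj (factor_coeff L u n t) * factor_coeff L u n s) (adj (ordpow k (factor_exp L u n t))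
        (gram (ordpow k (\<lambda>l. of_bool (l \<in> v))) (ordpow k (factor_exp L u n s) x)))))"
  using assms bounded_op_ordpow[of k] bounded_op_adj[OF bounded_op_ordpow, of k]
  by (simp add: factor_def adj_scaled S_op_eq gram_def bounded_op_sum bounded_op_scaleC
      scaleC_sum_right scaleC_scaleC mult_ac)

lemma adj_factor_S_op_factor:
  assumes L: "\<And>l. L l \<le> snd s l" "\<And>l. L l \<le> snd t l"
    and u: "u \<subseteq> {1..k}" "\<And>l. l \<notin> u \<Longrightarrow> n l = 0"
  defines "a \<equiv> \<lambda>l. nat (snd s l - L l)" and "b \<equiv> \<lambda>l. nat (snd t l - L l)"
  defines "m \<equiv> \<lambda>l. min (a l) (b l)"
  shows "adj (factor L u n t) (S_op k q T u (factor L u n s x))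
    = scaleC (qprod k q (\<lambda>i j. fst s i j - fst t i j + (int (a i) - int (b i)) * (L j + int (m j))))
        (adj (ordpow k (\<lambda>l. b l - a l)) (decomp_term k m u n (ordpow k (\<lambda>l. a l - b l) x)))"
proof (cases "\<forall>l. n l \<le> m l")
  case False
  then show ?thesis
    using adj_factor_S_op_factor_eq_0[OF L] bounded_op_0[OF bounded_op_adj[OF bounded_op_ordpow]]
    by (auto simp: decomp_term_def m_def a_def b_def)
next
  case True
  define Es where "Es = factor_exp L u n s"
  define Et where "Et = factor_exp L u n t"
  define e where "e v l = (of_bool (l \<in> v) :: nat)" for v :: "nat set" and l
  define c where "c v = decomp_exp m u n v" for v
  define ds where "ds v = qprod k q (\<lambda>i j. int (a i - b i) * int (c v j) - int (Es i) * int (e v j))" for v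
  define dt where "dt v = qprod k q (\<lambda>i j. int (b i - a i) * int (c v j) - int (Et i) * int (e v j))" for v
  define W where "W = qprod k q (\<lambda>i j. fst s i j - fst t i j + (int (a i) - int (b i)) * (L j + int (m j)))"
  have P: "bounded_op (ordpow k a')" "bounded_op (adj (ordpow k a'))" for a'
    by (simp_all add: bounded_op_ordpow bounded_op_adj)
  have n_le: "\<forall>l. int (n l) \<le> snd s l - L l" "\<forall>l. int (n l) \<le> snd t l - L l"
    using True L by (simp_all add: m_def a_def b_def le_nat_iff)
  have "adj (factor L u n t) (S_op k q T u (factor L u n s x)) = (\<Sum>v\<in>Pow u. scaleC ((-1) ^ card v)
      (scaleC (cnj (factor_coeff L u n t) * factor_coeff L u n s)
        (adj (ordpow k Et) (gram (ordpow k (e v)) (ordpow k Es x)))))"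
    unfolding Es_def Et_def e_def using n_le by (rule adj_factor_S_op_factor_expand)
  also have "\<dots> = (\<Sum>v\<in>Pow u. scaleC ((-1) ^ card v) (scaleC W
      (adj (ordpow k (\<lambda>l. b l - a l)) (gram (ordpow k (c v)) (ordpow k (\<lambda>l. a l - b l) x)))))"
  proof (intro sum.cong refl)
    fix v assume v: "v \<in> Pow u"
    have "e v l + Es l = c v l + (a l - b l)" "e v l + Et l = c v l + (b l - a l)" for l
      using v u(2)[of l] True[rule_format, of l] n_le[rule_format, of l]
      by (auto simp: e_def Es_def Et_def c_def decomp_exp_def factor_exp_def m_def a_def b_def min_def)
    then have "adj (ordpow k Et) (gram (ordpow k (e v)) (ordpow k Es x))
        = scaleC (cnj (dt v) * ds v) (adj (ordpow k (\<lambda>l. b l - a l)) (gram (ordpow k (c v)) (ordpow k (\<lambda>l. a l - b l) x)))"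
      unfolding ds_def dt_def by (rule adj_ordpow_gram_ordpow)
    moreover have "cnj (factor_coeff L u n t) * factor_coeff L u n s * (cnj (dt v) * ds v) = W"
      using factor_coeff_mult[OF L _ u(2), of v] v True
      by (simp add: ds_def dt_def W_def Es_def Et_def e_def c_def a_def b_def m_def)
    ultimately show "scaleC ((-1) ^ card v) (scaleC (cnj (factor_coeff L u n t) * factor_coeff L u n s)
        (adj (ordpow k Et) (gram (ordpow k (e v)) (ordpow k Es x))))
      = scaleC ((-1) ^ card v) (scaleC W
        (adj (ordpow k (\<lambda>l. b l - a l)) (gram (ordpow k (c v)) (ordpow k (\<lambda>l. a l - b l) x))))"
      by (simp add: scaleC_scaleC)
  qed
  also have "\<dots> = scaleC W
      (adj (ordpow k (\<lambda>l. b l - a l)) (decomp_term k m u n (ordpow k (\<lambda>l. a l - b l) x)))"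
    using True P by (simp add: decomp_term_def c_def[abs_def] bounded_op_sum bounded_op_scaleC
        scaleC_sum_right scaleC_scaleC mult.commute)
  finally show ?thesis
    by (simp only: W_def)
qed

lemma Tdc_inv_mult:
  assumes t: "t \<in> carrier (Gdc k)" and L: "\<And>l. L l \<le> snd s l" "\<And>l. L l \<le> snd t l"
  defines "a \<equiv> \<lambda>l. nat (snd s l - L l)" and "b \<equiv> \<lambda>l. nat (snd t l - L l)"
  defines "m \<equiv> \<lambda>l. min (a l) (b l)"
  shows "Tdc k q T (inv\<^bsub>Gdc k\<^esub> t \<otimes>\<^bsub>Gdc k\<^esub> s) x
    = scaleC (qprod k q (\<lambda>i j. fst s i j - fst t i j + (int (a i) - int (b i)) * (L j + int (m j))))
        (adj (ordpow k (\<lambda>l. b l - a l)) (ordpow k (\<lambda>l. a l - b l) x))"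
proof -
  define z where "z = gdc_mult k (gdc_inv k t) s"
  have s: "snd s l = L l + int (a l)" and t': "snd t l = L l + int (b l)" for l
    using L by (auto simp: a_def b_def)
  have "snd z l = int (a l - b l) - int (b l - a l)" "a l - b l = 0 \<or> b l - a l = 0" for l
    by (auto simp: z_def gdc_mult_snd gdc_inv_snd s t')
  then have "Tdc k q T z x = scaleC (qprod k q (\<lambda>i j.
      fst z i j - int (a i - b i) * int (b j - a j) + int (b i - a i) * int (b j - a j)))
      (adj (ordpow k (\<lambda>l. b l - a l)) (ordpow k (\<lambda>l. a l - b l) x))"
    by (rule Tdc_eq)
  also have "qprod k q (\<lambda>i j. fst z i j - int (a i - b i) * int (b j - a j) + int (b i - a i) * int (b j - a j))
      = qprod k q (\<lambda>i j. fst s i j - fst t i j + (int (a i) - int (b i)) * (L j + int (m j)))"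
  proof -
    have "int (a i - b i) = int (a i) - int (b i) + int (b i - a i)" "int (m i) = int (b i) - int (b i - a i)" for i
      by (auto simp: m_def)
    note eqs = this
    show ?thesis
      by (intro qprod_cong) (simp add: z_def eqs gdc_mult_fst gdc_inv_fst gdc_inv_snd s t' algebra_simps)
  qed
  finally show ?thesis
    using t by (simp add: z_def Gdc_inv)
qed

lemma sum_factors_eq_Tdc:
  assumes t: "t \<in> carrier (Gdc k)" and L: "\<And>l. L l \<le> snd s l" "\<And>l. L l \<le> snd t l"
    and M: "\<And>l. nat (snd s l - L l) \<le> M l" "\<And>l. nat (snd t l - L l) \<le> M l"
  shows "(\<Sum>(u, n)\<leftarrow>decomp_indices M k. adj (factor L u n t) (S_op k q T u (factor L u n s x)))
    = Tdc k q T (inv\<^bsub>Gdc k\<^esub> t \<otimes>\<^bsub>Gdc k\<^esub> s) x"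
proof -
  define a where "a l = nat (snd s l - L l)" for l
  define b where "b l = nat (snd t l - L l)" for l
  define m where "m l = min (a l) (b l)" for l
  define W where "W = qprod k q (\<lambda>i j. fst s i j - fst t i j + (int (a i) - int (b i)) * (L j + int (m j)))"
  have P: "bounded_op (adj (ordpow k (\<lambda>l. b l - a l)))"
    by (simp add: bounded_op_adj bounded_op_ordpow)
  have "(\<Sum>(u, n)\<leftarrow>decomp_indices M k. adj (factor L u n t) (S_op k q T u (factor L u n s x)))
      = (\<Sum>(u, n)\<leftarrow>decomp_indices M k.
          scaleC W (adj (ordpow k (\<lambda>l. b l - a l)) (decomp_term k m u n (ordpow k (\<lambda>l. a l - b l) x))))"
    by (intro arg_cong[where f = sum_list] map_cong refl)
       (auto simp: adj_factor_S_op_factor[OF L] W_def a_def[abs_def] b_def[abs_def] m_def[abs_def]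
         dest!: decomp_indices_support)
  also have "\<dots> = scaleC W (adj (ordpow k (\<lambda>l. b l - a l)) (decomp_sum k M m (ordpow k (\<lambda>l. a l - b l) x)))"
    using P by (simp add: decomp_sum_def bounded_op_sum_list scaleC_sum_list split_def)
  also have "\<dots> = scaleC W (adj (ordpow k (\<lambda>l. b l - a l)) (ordpow k (\<lambda>l. a l - b l) x))"
    using M by (simp add: decomp_sum_eq m_def a_def b_def le_trans[OF min.cobounded1])
  also have "\<dots> = Tdc k q T (inv\<^bsub>Gdc k\<^esub> t \<otimes>\<^bsub>Gdc k\<^esub> s) x"
    using Tdc_inv_mult[OF t L] by (simp add: W_def a_def[abs_def] b_def[abs_def] m_def[abs_def])
  finally show ?thesis .
qed

end

lemma cnonneg_sum_list: "(\<And>x. x \<in> set xs \<Longrightarrow> cnonneg (f x)) \<Longrightarrow> cnonneg (\<Sum>x\<leftarrow>xs. f x)"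
  by (induction xs) (auto simp: cnonneg_def)

lemma sum_sum_list_swap: "(\<Sum>s\<in>F. \<Sum>x\<leftarrow>xs. f s x) = (\<Sum>x\<leftarrow>xs. \<Sum>s\<in>F. (f s x :: 'b::comm_monoid_add))"
  by (induction xs) (auto simp: sum.distrib)

context q_commuting
begin

lemma Tdc_double_sum_nonneg:
  assumes S: "\<And>u. u \<subseteq> {1..k} \<Longrightarrow> positive_op (S_op k q T u)"
    and F: "finite F" "F \<subseteq> carrier (Gdc k)"
  shows "cnonneg (\<Sum>s\<in>F. \<Sum>t\<in>F. cinner (Tdc k q T (inv\<^bsub>Gdc k\<^esub> t \<otimes>\<^bsub>Gdc k\<^esub> s) (h s)) (h t))"
proof (cases "F = {}")
  case True
  then show ?thesis by (simp add: cnonneg_def)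
next
  case False
  define L where "L l = Min ((\<lambda>s. snd s l) ` F)" for l
  have L: "L l \<le> snd s l" if "s \<in> F" for s l
    unfolding L_def using F(1) that by (intro Min_le) auto
  define M where "M l = Max ((\<lambda>s. nat (snd s l - L l)) ` F)" for l
  have M: "nat (snd s l - L l) \<le> M l" if "s \<in> F" for s l
    unfolding M_def using F(1) that by (intro Max_ge) auto
  define Z where "Z u n = (\<Sum>s\<in>F. factor L u n s (h s))" for u n
  have "cinner (Tdc k q T (inv\<^bsub>Gdc k\<^esub> t \<otimes>\<^bsub>Gdc k\<^esub> s) (h s)) (h t)
      = (\<Sum>(u, n)\<leftarrow>decomp_indices M k. cinner (S_op k q T u (factor L u n s (h s))) (factor L u n t (h t)))"
    if "s \<in> F" "t \<in> F" for s t
  proof -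
    have "Tdc k q T (inv\<^bsub>Gdc k\<^esub> t \<otimes>\<^bsub>Gdc k\<^esub> s) (h s)
        = (\<Sum>(u, n)\<leftarrow>decomp_indices M k. adj (factor L u n t) (S_op k q T u (factor L u n s (h s))))"
      using that F(2) L M by (intro sum_factors_eq_Tdc[symmetric]) auto
    then show ?thesis
      by (simp add: cinner_sum_list_left split_def cinner_adj_left[OF bounded_op_factor])
  qed
  then have "(\<Sum>s\<in>F. \<Sum>t\<in>F. cinner (Tdc k q T (inv\<^bsub>Gdc k\<^esub> t \<otimes>\<^bsub>Gdc k\<^esub> s) (h s)) (h t))
      = (\<Sum>s\<in>F. \<Sum>t\<in>F. \<Sum>(u, n)\<leftarrow>decomp_indices M k.
           cinner (S_op k q T u (factor L u n s (h s))) (factor L u n t (h t)))"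
    by (intro sum.cong refl) auto
  also have "\<dots> = (\<Sum>(u, n)\<leftarrow>decomp_indices M k. cinner (S_op k q T u (Z u n)) (Z u n))"
    by (simp only: Z_def split_def sum_sum_list_swap bounded_op_sum[OF bounded_op_S_op] cinner_sum_sum)
  also have "cnonneg \<dots>"
  proof (rule cnonneg_sum_list, clarify)
    fix u n assume "(u, n) \<in> set (decomp_indices M k)"
    then have "u \<subseteq> {1..k}" using decomp_indices_support by blast
    then show "cnonneg (cinner (S_op k q T u (Z u n)) (Z u n))"
      using S unfolding positive_op_def by blast
  qed
  finally show ?thesis .
qed

lemma positive_definite_if_S_op_nonneg:
  assumes "\<And>u. u \<subseteq> {1..k} \<Longrightarrow> positive_op (S_op k q T u)"
  shows "positive_definite (Gdc k) (Tdc k q T)"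
  unfolding positive_definite_def Let_def
proof (intro conjI ballI allI impI)
  show "Tdc k q T (inv\<^bsub>Gdc k\<^esub> s) = adj (Tdc k q T s)" if "s \<in> carrier (Gdc k)" for s
    using that by (rule Tdc_inv)
  show "cnonneg (\<Sum>s\<in>{s \<in> carrier (Gdc k). h s \<noteq> 0}. \<Sum>t\<in>{s \<in> carrier (Gdc k). h s \<noteq> 0}.
      cinner (Tdc k q T (inv\<^bsub>Gdc k\<^esub> t \<otimes>\<^bsub>Gdc k\<^esub> s) (h s)) (h t))"
    if "finite {s \<in> carrier (Gdc k). h s \<noteq> 0}" for h
    using assms that by (intro Tdc_double_sum_nonneg) auto
qed

end

section \<open>Positive definiteness implies positivity of the \<open>S(u)\<close>\<close>

lemma sum_Pow_sign_union:
  fixes f :: "nat set \<Rightarrow> 'b::comm_ring_1"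
  assumes "finite u"
  shows "(\<Sum>v\<in>Pow u. \<Sum>w\<in>Pow u. (-1) ^ (card v + card w) * f (v \<union> w)) = (\<Sum>r\<in>Pow u. (-1) ^ card r * f r)"
  using assms
proof (induction u arbitrary: f rule: finite_induct)
  case (insert x u)
  have card: "card (insert x v) = Suc (card v)" if "v \<in> Pow u" for v
    using that insert.hyps finite_subset by (metis PowD card_insert_disjoint subsetD)
  define g where "g r = f r - f (insert x r)" for r
  define G where "G v w = (-1) ^ (card v + card w) * f (v \<union> w)" for v w
  have G: "G v w + G v (insert x w) + (G (insert x v) w + G (insert x v) (insert x w))
      = (-1) ^ (card v + card w) * g (v \<union> w)" if "v \<in> Pow u" "w \<in> Pow u" for v w
    using card[OF that(1)] card[OF that(2)] by (simp add: G_def g_def algebra_simps)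
  have "(\<Sum>v\<in>Pow (insert x u). \<Sum>w\<in>Pow (insert x u). G v w)
      = (\<Sum>v\<in>Pow u. (\<Sum>w\<in>Pow u. G v w + G v (insert x w))
          + (\<Sum>w\<in>Pow u. G (insert x v) w + G (insert x v) (insert x w)))"
    using insert.hyps by (simp add: sum_Pow_insert)
  also have "\<dots> = (\<Sum>v\<in>Pow u. \<Sum>w\<in>Pow u. (-1) ^ (card v + card w) * g (v \<union> w))"
    by (intro sum.cong refl) (simp add: sum.distrib[symmetric] G)
  also have "\<dots> = (\<Sum>r\<in>Pow u. (-1) ^ card r * g r)"
    by (rule insert.IH)
  also have "\<dots> = (\<Sum>r\<in>Pow (insert x u). (-1) ^ card r * f r)"
    using insert.hyps by (simp add: sum_Pow_insert card g_def algebra_simps)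
  finally show ?case by (simp add: G_def)
qed simp

lemma positive_definite_sum_nonneg:
  assumes "positive_definite G T" "\<And>s. bounded_op (T s)"
    and "finite A" "A \<subseteq> carrier G" "{s \<in> carrier G. h s \<noteq> 0} \<subseteq> A"
  shows "cnonneg (\<Sum>s\<in>A. \<Sum>t\<in>A. cinner (T (inv\<^bsub>G\<^esub> t \<otimes>\<^bsub>G\<^esub> s) (h s)) (h t))"
proof -
  define F where "F = {s \<in> carrier G. h s \<noteq> 0}"
  have F: "finite F" "F \<subseteq> A" and zero: "s \<in> A - F \<Longrightarrow> h s = 0" for s
    using assms(3-5) finite_subset by (auto simp: F_def)
  have "cnonneg (\<Sum>s\<in>F. \<Sum>t\<in>F. cinner (T (inv\<^bsub>G\<^esub> t \<otimes>\<^bsub>G\<^esub> s) (h s)) (h t))"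
    using assms(1) F(1) unfolding positive_definite_def Let_def F_def by blast
  also have "(\<Sum>s\<in>F. \<Sum>t\<in>F. cinner (T (inv\<^bsub>G\<^esub> t \<otimes>\<^bsub>G\<^esub> s) (h s)) (h t))
      = (\<Sum>s\<in>F. \<Sum>t\<in>A. cinner (T (inv\<^bsub>G\<^esub> t \<otimes>\<^bsub>G\<^esub> s) (h s)) (h t))"
    using assms(3) F zero by (intro sum.cong refl sum.mono_neutral_left) auto
  also have "\<dots> = (\<Sum>s\<in>A. \<Sum>t\<in>A. cinner (T (inv\<^bsub>G\<^esub> t \<otimes>\<^bsub>G\<^esub> s) (h s)) (h t))"
    using assms(2,3) F zero by (intro sum.mono_neutral_left) (auto simp: bounded_op_0)
  finally show ?thesis .
qed

definition gdc_neg_e :: "nat \<Rightarrow> nat set \<Rightarrow> gdc_elem" where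
  "gdc_neg_e k v = ((\<lambda>i j. 0), (\<lambda>l. - of_bool (l \<in> v \<and> 1 \<le> l \<and> l \<le> k)))"

lemma gdc_neg_e_carrier: "gdc_neg_e k v \<in> carrier (Gdc k)"
  by (simp add: gdc_neg_e_def gdc_carrier_iff)

lemma inj_on_gdc_neg_e: "inj_on (gdc_neg_e k) (Pow {1..k})"
proof
  fix v w assume v: "v \<in> Pow {1..k}" and w: "w \<in> Pow {1..k}" and eq: "gdc_neg_e k v = gdc_neg_e k w"
  have "(l \<in> v \<and> 1 \<le> l \<and> l \<le> k) = (l \<in> w \<and> 1 \<le> l \<and> l \<le> k)" for l
    using arg_cong[OF eq, of "\<lambda>s. snd s l"] by (simp add: gdc_neg_e_def of_bool_eq_iff)
  then show "v = w" using v w by (auto simp: subset_iff)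
qed

context q_commuting
begin

(* The value of the test function at x^-e(v); its coefficient cancels the powers of q produced
   by T(x^(e(w)-e(v))) (cinner_Tdc_probe). *)
definition probe :: "nat set \<Rightarrow> 'a \<Rightarrow> 'a" where
  "probe v g = scaleC ((-1) ^ card v * qprod k q (\<lambda>i j. - (of_bool (i \<in> v) * of_bool (j \<in> v))))
     (ordpow k (\<lambda>l. of_bool (l \<in> v)) g)"

lemma cinner_Tdc_probe:
  assumes "v \<subseteq> {1..k}" "w \<subseteq> {1..k}"
  shows "cinner (Tdc k q T (inv\<^bsub>Gdc k\<^esub> gdc_neg_e k w \<otimes>\<^bsub>Gdc k\<^esub> gdc_neg_e k v) (probe v g)) (probe w g)
    = (-1) ^ (card v + card w) * cinner (ordpow k (\<lambda>l. of_bool (l \<in> v \<union> w)) g) (ordpow k (\<lambda>l. of_bool (l \<in> v \<union> w)) g)"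
proof -
  define ev where "ev l = (of_bool (l \<in> v) :: nat)" for l
  define ew where "ew l = (of_bool (l \<in> w) :: nat)" for l
  define e where "e l = (of_bool (l \<in> v \<union> w) :: nat)" for l
  define A where "A l = ew l - ev l" for l
  define B where "B l = ev l - ew l" for l
  define z where "z = inv\<^bsub>Gdc k\<^esub> gdc_neg_e k w \<otimes>\<^bsub>Gdc k\<^esub> gdc_neg_e k v"
  have z_eq: "z = gdc_mult k (gdc_inv k (gdc_neg_e k w)) (gdc_neg_e k v)"
    unfolding z_def by (simp only: Gdc_inv[OF gdc_neg_e_carrier] Gdc_simps)
  have neg_e: "fst (gdc_neg_e k x) i j = 0" "snd (gdc_neg_e k x) l = - int (of_bool (l \<in> x))"
    if "x \<subseteq> {1..k}" for x i j l
    using that by (auto simp: gdc_neg_e_def)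
  have z: "fst z i j = (if 1 \<le> i \<and> i < j \<and> j \<le> k then - int (ew i) * int (ew j) + int (ev i) * int (ew j) else 0)"
    "snd z l = int (A l) - int (B l)" "A l = 0 \<or> B l = 0" for i j l
    by (simp_all add: z_eq gdc_mult_fst gdc_mult_snd gdc_inv_fst gdc_inv_snd neg_e[OF assms(1)] neg_e[OF assms(2)] ev_def ew_def
        A_def B_def of_bool_def)
  have PA: "ordpow k A (ordpow k ev g) = scaleC (qprod k q (\<lambda>i j. - (int (ev i) * int (A j)))) (ordpow k e g)"
    and PB: "ordpow k B (ordpow k ew g) = scaleC (qprod k q (\<lambda>i j. - (int (ew i) * int (B j)))) (ordpow k e g)"
  proof -
    have "(\<lambda>l. A l + ev l) = e" "(\<lambda>l. B l + ew l) = e"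
      by (auto simp: fun_eq_iff ev_def ew_def e_def A_def B_def)
    then show "ordpow k A (ordpow k ev g) = scaleC (qprod k q (\<lambda>i j. - (int (ev i) * int (A j)))) (ordpow k e g)"
      "ordpow k B (ordpow k ew g) = scaleC (qprod k q (\<lambda>i j. - (int (ew i) * int (B j)))) (ordpow k e g)"
      by (simp_all add: ordpow_mult)
  qed
  have "cinner (Tdc k q T z (probe v g)) (probe w g) = (-1) ^ (card v + card w) * cinner (ordpow k e g) (ordpow k e g)"
    by (simp add: probe_def Tdc_eq[OF z(2,3)] PA PB cinner_adj_left bounded_op_ordpow cinner_scaleC_left
        cinner_scaleC_right bounded_op_scaleC qprod_cnj mult_ac power_add ev_def[symmetric] ew_def[symmetric])
       (rule disjI2, simp only: qprod_add, rule trans[OF qprod_cong qprod_zero],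
        auto simp: z ev_def ew_def A_def B_def)
  moreover have "e = (\<lambda>l. of_bool (l \<in> v \<union> w))"
    by (rule ext) (simp only: e_def)
  ultimately show ?thesis
    by (simp only: z_def)
qed

lemma S_op_nonneg_if_positive_definite:
  assumes pd: "positive_definite (Gdc k) (Tdc k q T)" and u: "u \<subseteq> {1..k}"
  shows "positive_op (S_op k q T u)"
  unfolding positive_op_def
proof
  fix g
  define A where "A = gdc_neg_e k ` Pow u"
  define h where "h s = (if s \<in> A then probe (inv_into (Pow u) (gdc_neg_e k) s) g else 0)" for s
  have inj: "inj_on (gdc_neg_e k) (Pow u)"
    using u by (intro inj_on_subset[OF inj_on_gdc_neg_e]) auto
  have h: "h (gdc_neg_e k v) = probe v g" if "v \<in> Pow u" for v
    using that inj by (simp add: h_def A_def)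
  have "finite u" using u by (rule finite_subset) simp
  then have "cnonneg (\<Sum>s\<in>A. \<Sum>t\<in>A. cinner (Tdc k q T (inv\<^bsub>Gdc k\<^esub> t \<otimes>\<^bsub>Gdc k\<^esub> s) (h s)) (h t))"
    by (intro positive_definite_sum_nonneg[OF pd bounded_op_Tdc])
       (auto simp: A_def h_def gdc_neg_e_carrier simp del: Gdc_simps)
  also have "(\<Sum>s\<in>A. \<Sum>t\<in>A. cinner (Tdc k q T (inv\<^bsub>Gdc k\<^esub> t \<otimes>\<^bsub>Gdc k\<^esub> s) (h s)) (h t))
      = (\<Sum>v\<in>Pow u. \<Sum>w\<in>Pow u.
          cinner (Tdc k q T (inv\<^bsub>Gdc k\<^esub> gdc_neg_e k w \<otimes>\<^bsub>Gdc k\<^esub> gdc_neg_e k v) (probe v g)) (probe w g))"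
    unfolding A_def using inj by (simp add: sum.reindex h del: Gdc_simps)
  also have "\<dots> = (\<Sum>v\<in>Pow u. \<Sum>w\<in>Pow u. (-1) ^ (card v + card w)
      * cinner (ordpow k (\<lambda>l. of_bool (l \<in> v \<union> w)) g) (ordpow k (\<lambda>l. of_bool (l \<in> v \<union> w)) g))"
    using u by (intro sum.cong refl cinner_Tdc_probe) auto
  also have "\<dots> = (\<Sum>r\<in>Pow u. (-1) ^ card r
      * cinner (ordpow k (\<lambda>l. of_bool (l \<in> r)) g) (ordpow k (\<lambda>l. of_bool (l \<in> r)) g))"
    using \<open>finite u\<close> by (rule sum_Pow_sign_union)
  also have "\<dots> = cinner (S_op k q T u g) g"
    by (simp add: S_op_eq gram_def cinner_sum_left cinner_scaleC_left cinner_adj_left bounded_op_ordpow)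
  finally show "cnonneg (cinner (S_op k q T u g) g)" .
qed

lemma positive_definite_iff_S_op_nonneg:
  "positive_definite (Gdc k) (Tdc k q T) \<longleftrightarrow> (\<forall>u. u \<subseteq> {1..k} \<longrightarrow> positive_op (S_op k q T u))"
  using S_op_nonneg_if_positive_definite positive_definite_if_S_op_nonneg by blast

end

theorem theorem4p4:
  fixes k :: nat
    and T :: "nat \<Rightarrow> 'a::chilbert \<Rightarrow> 'a"
    and q :: "nat \<Rightarrow> nat \<Rightarrow> complex"
  assumes contr: "\<And>i. 1 \<le> i \<Longrightarrow> i \<le> k \<Longrightarrow> contraction (T i)"
    and q_circle: "\<And>i j. 1 \<le> i \<Longrightarrow> i < j \<Longrightarrow> j \<le> k \<Longrightarrow> cmod (q i j) = 1"
    and q_comm: "\<And>i j. 1 \<le> i \<Longrightarrow> i < j \<Longrightarrow> j \<le> k \<Longrightarrow>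
                   T i \<circ> T j = (\<lambda>h. scaleC (q i j) (T j (T i h)))"
  shows "positive_definite (Gdc k) (Tdc k q T) \<longleftrightarrow>
         (\<forall>u. u \<subseteq> {1..k} \<longrightarrow> positive_op (S_op k q T u))"
proof -
  interpret q_commuting k q T
    by unfold_locales (use contr q_circle q_comm in \<open>auto simp: contraction_def\<close>)
  show ?thesis
    by (rule positive_definite_iff_S_op_nonneg)
qed

end
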